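(* Let $X,X_1,X_2,\dots$ be i.i.d. positive random variables with $\mathbb{E}X=1$, let $p\ge2$ be an integer, and suppose $\mathbb{E}X^{p+2}<\infty$. Put $S_r=X_1+\dots+X_r$, $M_n=\max_{1\le i\le n}X_i$, $T_n=\frac{X_1^2+\dots+X_n^2}{X_1+\dots+X_n}$ and $R_n^{(p)}=\frac{T_n^pM_n^2}{X_1+\dots+X_n}$. For $1\le r\le p$ let $C(p,r)$ be the set of tuples $\gamma=(\gamma_1,\dots,\gamma_r)$ of positive integers with $\gamma_1+\dots+\gamma_r=p$. Then there is a constant $c>0$ not depending on $n$ such that for all $n\ge 2p$, $$c\,\mathbb{E}R_n^{(p)}\le e^{-cn}+\max_{1\le r\le p}\max_{1\le k\le r}\max_{\gamma\in C(p,r)}\frac{1}{n^{p-r+1}}\mathbb{E}\frac{X_1^{2\gamma_1}\cdots X_r^{2\gamma_r}}{\left(\frac1nS_r+1\right)^{p+1}}X_k^2+\max_{1\le r\le p}\max_{\gamma\in C(p,r)}\frac{1}{n^{p-r+1}}\mathbb{E}\frac{X_1^{2\gamma_1}\cdots X_r^{2\gamma_r}}{\left(\frac1nS_r+1\right)^{p+1}}\cdot\mathbb{E}M_n^2.$$ *)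

theory Defs
  imports "HOL-Probability.Probability"
begin

definition compositions :: "nat \<Rightarrow> nat \<Rightarrow> nat list set" where
  "compositions p r = {\<gamma>. length \<gamma> = r \<and> (\<forall>g\<in>set \<gamma>. 0 < g) \<and> sum_list \<gamma> = p}"

definition psum :: "(nat \<Rightarrow> 'a \<Rightarrow> real) \<Rightarrow> nat \<Rightarrow> 'a \<Rightarrow> real" where
  "psum X r \<omega> = (\<Sum>i=1..r. X i \<omega>)"

definition maxX :: "(nat \<Rightarrow> 'a \<Rightarrow> real) \<Rightarrow> nat \<Rightarrow> 'a \<Rightarrow> real" where
  "maxX X n \<omega> = Max ((\<lambda>i. X i \<omega>) ` {1..n})"

definition Tstat :: "(nat \<Rightarrow> 'a \<Rightarrow> real) \<Rightarrow> nat \<Rightarrow> 'a \<Rightarrow> real" where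
  "Tstat X n \<omega> = (\<Sum>i=1..n. (X i \<omega>)^2) / psum X n \<omega>"

definition Rstat :: "nat \<Rightarrow> (nat \<Rightarrow> 'a \<Rightarrow> real) \<Rightarrow> nat \<Rightarrow> 'a \<Rightarrow> real" where
  "Rstat p X n \<omega> = (Tstat X n \<omega>)^p * (maxX X n \<omega>)^2 / psum X n \<omega>"

definition Wterm :: "nat \<Rightarrow> (nat \<Rightarrow> 'a \<Rightarrow> real) \<Rightarrow> nat \<Rightarrow> nat list \<Rightarrow> 'a \<Rightarrow> real" where
  "Wterm p X n \<gamma> \<omega> =
     (\<Prod>j<length \<gamma>. (X (Suc j) \<omega>) ^ (2 * \<gamma> ! j)) / (psum X (length \<gamma>) \<omega> / real n + 1) ^ (p + 1)"

end

theory Submission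
  imports Defs
begin

text \<open>
  Let \<open>u(y) = y\<^sup>2 / (1 + y/n)\<close> be the damped square, \<open>U = \<Sum>\<^sub>i\<^sub>\<le>\<^sub>n u(X\<^sub>i)\<close> and
  \<open>a = 1 + S\<^sub>n/n\<close>. Since \<open>X\<^sub>i\<^sup>2 = u(X\<^sub>i) (1 + X\<^sub>i/n) \<le> a u(X\<^sub>i)\<close>, on the event \<open>S\<^sub>n \<ge> n/2\<close>
  (where \<open>a \<le> 3 S\<^sub>n/n\<close>) we get \<open>R\<^sub>n \<le> (3/n)\<^sup>p\<^sup>+\<^sup>1 U\<^sup>p M\<^sub>n\<^sup>2 / a\<close>. On the complement
  \<open>R\<^sub>n \<le> S\<^sub>n\<^sup>p\<^sup>+\<^sup>1 \<le> n\<^sup>p\<^sup>+\<^sup>1\<close>, and as \<open>E X = 1\<close> this event has exponentially small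
  probability by a Chernoff bound.

  Expanding \<open>U\<^sup>p\<close> as a sum over \<open>p\<close>-tuples of indices, \<open>M\<^sub>n\<^sup>2 / a\<close> is at most the damped
  square of an entry of the tuple if the maximum is attained inside the tuple, and otherwise at
  most the largest \<open>X\<^sub>j\<^sup>2\<close> with \<open>j\<close> outside the tuple, which is independent of the entries of
  the tuple. The first alternative produces \<open>E u(X\<^sub>1)\<^sup>p\<^sup>+\<^sup>1\<close>, the term \<open>\<gamma> = (p)\<close>, \<open>k = 1\<close>
  of the first maximum, plus terms of order \<open>1/n\<close>; the second produces
  \<open>E U\<^sup>p \<cdot> E M\<^sub>n\<^sup>2 = O(n\<^sup>p) E M\<^sub>n\<^sup>2\<close>. Both \<open>1/n\<close> and \<open>E M\<^sub>n\<^sup>2/n\<close> are controlled by the term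
  \<open>\<gamma> = (1, \<dots>, 1)\<close> of the second maximum, which is at least a positive constant over \<open>n\<close>.
\<close>

definition damped_sq :: "nat \<Rightarrow> real \<Rightarrow> real" where
  "damped_sq n y = y\<^sup>2 / (1 + y / real n)"

lemma damped_sq_measurable [measurable]: "damped_sq n \<in> borel_measurable borel"
  unfolding damped_sq_def by measurable

lemma damped_sq_nonneg: "0 \<le> y \<Longrightarrow> 0 \<le> damped_sq n y"
  unfolding damped_sq_def by simp

lemma damped_sq_le_sq:
  assumes "0 \<le> y"
  shows "damped_sq n y \<le> y\<^sup>2"
proof -
  have "1 \<le> 1 + y / real n"
    using assms by simp
  then show ?thesis
    unfolding damped_sq_def using divide_left_mono[of 1 "1 + y / real n" "y\<^sup>2"] by simp
qed

lemma damped_sq_le_linear: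
  assumes "0 \<le> y" "0 < n"
  shows "damped_sq n y \<le> real n * y"
proof -
  have "0 < 1 + y / real n"
    using assms by (simp add: add_pos_nonneg)
  moreover have "y\<^sup>2 \<le> real n * y * (1 + y / real n)"
    using assms by (simp add: algebra_simps power2_eq_square)
  ultimately show ?thesis
    unfolding damped_sq_def by (simp add: divide_le_eq)
qed

lemma damped_sq_power_le:
  assumes "0 \<le> y" "0 < n" "1 \<le> k"
  shows "damped_sq n y ^ k \<le> real n ^ (k - 1) * y ^ (k + 1)"
proof -
  obtain j where k: "k = Suc j"
    using assms(3) by (cases k) auto
  have "damped_sq n y ^ k = damped_sq n y * damped_sq n y ^ j"
    by (simp add: k)
  also have "\<dots> \<le> y\<^sup>2 * (real n * y) ^ j"
    by (intro mult_mono power_mono damped_sq_le_sq damped_sq_le_linear damped_sq_nonneg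
        assms zero_le_power)
  also have "\<dots> = real n ^ (k - 1) * y ^ (k + 1)"
    by (simp add: k power_mult_distrib power2_eq_square algebra_simps)
  finally show ?thesis .
qed

lemma sq_eq_damped_sq_mult:
  assumes "0 \<le> y"
  shows "y\<^sup>2 = damped_sq n y * (1 + y / real n)"
proof -
  have "0 < 1 + y / real n"
    using assms by (simp add: add_pos_nonneg)
  then show ?thesis
    unfolding damped_sq_def by simp
qed

lemma sq_div_le_damped_sq:
  assumes "0 \<le> y" "y \<le> s"
  shows "y\<^sup>2 / (1 + s / real n) \<le> damped_sq n y"
proof -
  have "0 < 1 + y / real n"
    using assms by (simp add: add_pos_nonneg)
  moreover have "1 + y / real n \<le> 1 + s / real n"
    using assms by (simp add: divide_right_mono)
  ultimately show ?thesis
    unfolding damped_sq_def by (intro divide_left_mono) auto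
qed

lemma power_le_one_add_power:
  fixes y :: real
  assumes "0 \<le> y" "j \<le> k"
  shows "y ^ j \<le> 1 + y ^ k"
proof (cases "y \<le> 1")
  case True
  then have "y ^ j \<le> 1"
    using assms(1) by (simp add: power_le_one)
  then show ?thesis
    using zero_le_power[OF assms(1), of k] by linarith
next
  case False
  then have "y ^ j \<le> y ^ k"
    using assms(2) by (intro power_increasing) auto
  then show ?thesis
    by linarith
qed

lemma power_add_le_two_power:
  fixes a b :: real
  assumes "0 \<le> a" "0 \<le> b"
  shows "(a + b) ^ q \<le> 2 ^ q * (a ^ q + b ^ q)"
proof -
  have "(a + b) ^ q \<le> (2 * max a b) ^ q"
    using assms by (intro power_mono) auto
  also have "\<dots> = 2 ^ q * max a b ^ q"
    by (simp add: power_mult_distrib)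
  also have "max a b ^ q \<le> a ^ q + b ^ q"
    using assms by (cases "a \<le> b") (auto simp: max_def)
  finally show ?thesis
    by simp
qed

lemma sum_power_le_card_power:
  fixes x :: "nat \<Rightarrow> real"
  assumes "finite J" "J \<noteq> {}" "\<And>i. i \<in> J \<Longrightarrow> 0 \<le> x i"
  shows "(\<Sum>i\<in>J. x i) ^ j \<le> real (card J) ^ j * (\<Sum>i\<in>J. x i ^ j)"
proof -
  define m where "m = Max (x ` J)"
  have m: "m \<in> x ` J" "\<And>i. i \<in> J \<Longrightarrow> x i \<le> m"
    unfolding m_def using assms by auto
  have "(\<Sum>i\<in>J. x i) ^ j \<le> (real (card J) * m) ^ j"
    using m sum_bounded_above[of J x m] assms by (intro power_mono sum_nonneg) auto
  also have "\<dots> = real (card J) ^ j * m ^ j"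
    by (simp add: power_mult_distrib)
  also have "m ^ j \<le> (\<Sum>i\<in>J. x i ^ j)"
    using m assms by (auto intro!: member_le_sum)
  finally show ?thesis
    by (simp add: mult_left_mono)
qed

lemma exp_minus_le_quadratic:
  fixes y :: real
  assumes "0 \<le> y"
  shows "exp (- y) \<le> 1 - y + y\<^sup>2 / 2"
proof -
  define h where "h y = 1 - y + y\<^sup>2 / 2 - exp (- y)" for y :: real
  have "h 0 \<le> h y"
  proof (rule DERIV_nonneg_imp_nondecreasing[OF assms])
    fix x :: real
    have "(h has_real_derivative - 1 + x + exp (- x)) (at x)"
      unfolding h_def by (auto intro!: derivative_eq_intros simp: power2_eq_square)
    moreover have "0 \<le> - 1 + x + exp (- x)"
      using exp_ge_add_one_self[of "- x"] by simp
    ultimately show "\<exists>d. (h has_real_derivative d) (at x) \<and> 0 \<le> d"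
      by blast
  qed
  then show ?thesis
    unfolding h_def by simp
qed

lemma power_le_exp_mult:
  fixes x a :: real
  assumes "0 < a" "0 \<le> x"
  shows "x ^ q \<le> (real q / a) ^ q * exp (a * x)"
proof (cases "q = 0")
  case True
  then show ?thesis
    using assms by simp
next
  case False
  have "a * x / real q \<le> exp (a * x / real q)"
    using exp_ge_add_one_self[of "a * x / real q"] by linarith
  then have "(a * x / real q) ^ q \<le> exp (a * x / real q) ^ q"
    using assms by (intro power_mono) auto
  also have "\<dots> = exp (a * x)"
    using False by (simp add: exp_of_nat_mult[symmetric])
  finally have *: "(a * x / real q) ^ q \<le> exp (a * x)" .
  have "real q / a * (a * x / real q) = x"
    using assms False by simp
  then have "x ^ q = (real q / a) ^ q * (a * x / real q) ^ q"
    by (metis power_mult_distrib)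
  also have "\<dots> \<le> (real q / a) ^ q * exp (a * x)"
    using * assms by (intro mult_left_mono) auto
  finally show ?thesis .
qed

lemma power_sum_eq_sum_PiE:
  fixes g :: "nat \<Rightarrow> real"
  assumes "finite N"
  shows "(\<Sum>i\<in>N. g i) ^ p = (\<Sum>f\<in>PiE {..<p} (\<lambda>_. N). \<Prod>l<p. g (f l))"
  using prod_sum_PiE[of "{..<p}" "\<lambda>_. N" "\<lambda>_ i. g i"] assms by simp

text \<open>Each of the \<open>p\<close> positions \<open>l\<close> contributes \<open>(\<Sum> g\<^sup>2) (\<Sum> g)\<^sup>p\<^sup>-\<^sup>1\<close>: the factor
  at position \<open>l\<close> is counted twice.\<close>

lemma sum_PiE_prod_mult_sum:
  fixes g :: "nat \<Rightarrow> real"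
  assumes "finite N"
  shows "(\<Sum>f\<in>PiE {..<p} (\<lambda>_. N). (\<Prod>l<p. g (f l)) * (\<Sum>l<p. g (f l)))
     = real p * ((\<Sum>i\<in>N. g i ^ 2) * (\<Sum>i\<in>N. g i) ^ (p - 1))"
proof -
  have marked: "(\<Sum>f\<in>PiE {..<p} (\<lambda>_. N). (\<Prod>m<p. g (f m)) * g (f l))
      = (\<Sum>i\<in>N. g i ^ 2) * (\<Sum>i\<in>N. g i) ^ (p - 1)" if l: "l < p" for l
  proof -
    define h where "h m i = (if m = l then g i ^ 2 else g i)" for m i
    have "(\<Prod>m<p. g (f m)) * g (f l) = (\<Prod>m<p. h m (f m))" for f
    proof -
      have "(\<Prod>m<p. h m (f m)) = h l (f l) * (\<Prod>m\<in>{..<p}-{l}. g (f m))"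
        using l by (subst prod.remove[of _ l]) (auto simp: h_def intro!: prod.cong)
      moreover have "(\<Prod>m<p. g (f m)) = g (f l) * (\<Prod>m\<in>{..<p}-{l}. g (f m))"
        using l by (subst prod.remove[of _ l]) auto
      ultimately show ?thesis
        by (simp add: h_def power2_eq_square)
    qed
    then have "(\<Sum>f\<in>PiE {..<p} (\<lambda>_. N). (\<Prod>m<p. g (f m)) * g (f l))
        = (\<Prod>m<p. \<Sum>i\<in>N. h m i)"
      using prod_sum_PiE[of "{..<p}" "\<lambda>_. N" h] assms by simp
    also have "\<dots> = (\<Sum>i\<in>N. h l i) * (\<Prod>m\<in>{..<p}-{l}. \<Sum>i\<in>N. g i)"
      using l by (subst prod.remove[of _ l]) (auto simp: h_def intro!: prod.cong)
    finally show ?thesis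
      using l by (simp add: h_def)
  qed
  have "(\<Sum>f\<in>PiE {..<p} (\<lambda>_. N). (\<Prod>l<p. g (f l)) * (\<Sum>l<p. g (f l)))
      = (\<Sum>l<p. \<Sum>f\<in>PiE {..<p} (\<lambda>_. N). (\<Prod>m<p. g (f m)) * g (f l))"
    by (simp add: sum_distrib_left sum.swap[of _ _ "{..<p}"])
  also have "\<dots> = real p * ((\<Sum>i\<in>N. g i ^ 2) * (\<Sum>i\<in>N. g i) ^ (p - 1))"
    by (simp add: marked)
  finally show ?thesis .
qed

lemma finite_compositions: "finite (compositions p r)"
proof (rule finite_subset)
  show "compositions p r \<subseteq> {\<gamma>. set \<gamma> \<subseteq> {..p} \<and> length \<gamma> = r}"
    unfolding compositions_def using member_le_sum_list by fastforce
  show "finite {\<gamma>. set \<gamma> \<subseteq> {..p} \<and> length \<gamma> = r}"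
    by (rule finite_lists_length_eq) simp
qed

lemma finite_composition_terms:
  "finite {F r k \<gamma> | r k \<gamma>. 1 \<le> r \<and> r \<le> p \<and> 1 \<le> k \<and> k \<le> r \<and> \<gamma> \<in> compositions p r}"
  "finite {G r \<gamma> | r \<gamma>. 1 \<le> r \<and> r \<le> p \<and> \<gamma> \<in> compositions p r}"
proof -
  have "{F r k \<gamma> | r k \<gamma>. 1 \<le> r \<and> r \<le> p \<and> 1 \<le> k \<and> k \<le> r \<and> \<gamma> \<in> compositions p r}
      \<subseteq> (\<lambda>(r, k, \<gamma>). F r k \<gamma>) ` ({..p} \<times> {..p} \<times> (\<Union>r\<le>p. compositions p r))"
    "{G r \<gamma> | r \<gamma>. 1 \<le> r \<and> r \<le> p \<and> \<gamma> \<in> compositions p r}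
      \<subseteq> (\<lambda>(r, \<gamma>). G r \<gamma>) ` ({..p} \<times> (\<Union>r\<le>p. compositions p r))"
    by (fastforce simp: image_iff)+
  then show "finite {F r k \<gamma> | r k \<gamma>. 1 \<le> r \<and> r \<le> p \<and> 1 \<le> k \<and> k \<le> r \<and> \<gamma> \<in> compositions p r}"
    "finite {G r \<gamma> | r \<gamma>. 1 \<le> r \<and> r \<le> p \<and> \<gamma> \<in> compositions p r}"
    by (auto elim!: finite_subset intro!: finite_imageI finite_cartesian_product finite_compositions)
qed

lemma Wterm_singleton_mult_sq:
  "0 < n \<Longrightarrow> Wterm p X n [p] \<omega> * X 1 \<omega> ^ 2 = damped_sq n (X 1 \<omega>) ^ (p + 1)"
  unfolding Wterm_def damped_sq_def psum_def
  by (simp add: power_divide power_mult[symmetric] power_add[symmetric] add.commute mult.commute)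

lemma Wterm_replicate_one:
  "Wterm p X n (replicate p 1) \<omega> = (\<Prod>j<p. X (Suc j) \<omega> ^ 2) / (psum X p \<omega> / real n + 1) ^ (p + 1)"
  unfolding Wterm_def by (simp add: mult.commute)

lemma maxX_attained:
  assumes "0 < n"
  shows "\<exists>k\<in>{1..n}. maxX X n \<omega> = X k \<omega>"
proof -
  have "Max ((\<lambda>i. X i \<omega>) ` {1..n}) \<in> (\<lambda>i. X i \<omega>) ` {1..n}"
    using assms by (intro Max_in) auto
  then show ?thesis
    unfolding maxX_def by auto
qed

lemma le_maxX: "i \<in> {1..n} \<Longrightarrow> X i \<omega> \<le> maxX X n \<omega>"
  unfolding maxX_def by (rule Max_ge) auto

lemma maxX_le_psum:
  assumes "0 < n" "\<And>i. 0 \<le> X i \<omega>"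
  shows "maxX X n \<omega> \<le> psum X n \<omega>"
proof -
  from maxX_attained[OF assms(1)]
  obtain k where k: "k \<in> {1..n}" "maxX X n \<omega> = X k \<omega>" ..
  have "X k \<omega> \<le> (\<Sum>i=1..n. X i \<omega>)"
    using k(1) assms(2) by (intro member_le_sum) auto
  then show ?thesis
    unfolding psum_def k(2) .
qed

lemma sum_sq_le_sum_damped_sq_mult:
  assumes "\<And>i. 0 \<le> X i \<omega>"
  shows "(\<Sum>i=1..n. (X i \<omega>)\<^sup>2) \<le> (\<Sum>i\<in>{1..n}. damped_sq n (X i \<omega>)) * (1 + psum X n \<omega> / real n)"
proof -
  have "(\<Sum>i=1..n. (X i \<omega>)\<^sup>2) = (\<Sum>i=1..n. damped_sq n (X i \<omega>) * (1 + X i \<omega> / real n))"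
    using assms by (intro sum.cong refl sq_eq_damped_sq_mult)
  also have "\<dots> \<le> (\<Sum>i=1..n. damped_sq n (X i \<omega>) * (1 + psum X n \<omega> / real n))"
  proof (rule sum_mono)
    fix i assume "i \<in> {1..n}"
    then have "X i \<omega> \<le> psum X n \<omega>"
      unfolding psum_def using assms by (intro member_le_sum) auto
    then show "damped_sq n (X i \<omega>) * (1 + X i \<omega> / real n)
        \<le> damped_sq n (X i \<omega>) * (1 + psum X n \<omega> / real n)"
      using assms by (intro mult_left_mono damped_sq_nonneg) (simp_all add: divide_right_mono)
  qed
  finally show ?thesis
    by (simp add: sum_distrib_right)
qed

lemma Rstat_nonneg: "(\<And>i. 0 < X i \<omega>) \<Longrightarrow> 0 \<le> Rstat p X n \<omega>"
  unfolding Rstat_def Tstat_def psum_def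
  by (intro divide_nonneg_nonneg mult_nonneg_nonneg zero_le_power sum_nonneg zero_le_power2)
    (simp_all add: order_less_imp_le)

lemma Rstat_le_psum_power:
  assumes "0 < n" "\<And>i. 0 < X i \<omega>"
  shows "Rstat p X n \<omega> \<le> psum X n \<omega> ^ (p + 1)"
proof -
  define S where "S = psum X n \<omega>"
  define m where "m = maxX X n \<omega>"
  have S: "0 < S"
    unfolding S_def psum_def using assms by (intro sum_pos) auto
  have "X 1 \<omega> \<le> m"
    unfolding m_def using assms by (intro le_maxX) auto
  moreover have "m \<le> S"
    unfolding m_def S_def by (intro maxX_le_psum assms(1) less_imp_le assms(2))
  ultimately have m: "0 \<le> m" "m \<le> S"
    using assms(2)[of 1] by linarith+
  have "(\<Sum>i=1..n. (X i \<omega>)\<^sup>2) \<le> (\<Sum>i=1..n. m * X i \<omega>)"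
    unfolding m_def using assms le_maxX[of _ n X \<omega>]
    by (intro sum_mono) (auto simp: power2_eq_square intro: mult_right_mono less_imp_le)
  then have "Tstat X n \<omega> \<le> m"
    unfolding Tstat_def S_def[symmetric] using S by (simp add: divide_le_eq S_def psum_def sum_distrib_left)
  moreover have "0 \<le> Tstat X n \<omega>"
    unfolding Tstat_def psum_def using assms
    by (intro divide_nonneg_nonneg sum_nonneg) (auto intro: less_imp_le)
  ultimately have "Tstat X n \<omega> ^ p \<le> S ^ p"
    using m by (intro power_mono) auto
  moreover have "m\<^sup>2 / S \<le> S"
    using m S by (simp add: divide_le_eq power2_eq_square mult_mono)
  ultimately have "Tstat X n \<omega> ^ p * (m\<^sup>2 / S) \<le> S ^ p * S"
    using S by (intro mult_mono) auto
  then show ?thesis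
    unfolding Rstat_def m_def S_def by (simp add: mult.commute)
qed

lemma (in prob_space) integral_pos:
  fixes f :: "'a \<Rightarrow> real"
  assumes "integrable M f" "\<And>x. x \<in> space M \<Longrightarrow> 0 < f x"
  shows "0 < integral\<^sup>L M f"
proof -
  have nonneg: "AE x in M. 0 \<le> f x"
    using assms(2) by (intro AE_I2) (simp add: order_less_imp_le)
  have "integral\<^sup>L M f \<noteq> 0"
  proof
    assume "integral\<^sup>L M f = 0"
    then have "AE x in M. f x = 0"
      using integral_nonneg_eq_0_iff_AE[OF assms(1) nonneg] by simp
    with AE_space have "AE x in M. False"
      by eventually_elim (use assms(2) in force)
    then show False
      by simp
  qed
  moreover have "0 \<le> integral\<^sup>L M f"
    using nonneg by (rule integral_nonneg_AE)
  ultimately show ?thesis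
    by simp
qed

section \<open>The i.i.d. setting\<close>

locale iid_positive = prob_space M for M :: "'a measure" +
  fixes X :: "nat \<Rightarrow> 'a \<Rightarrow> real" and p :: nat
  assumes indep: "indep_vars (\<lambda>_. borel) X UNIV"
    and identically_distributed: "\<And>i. distr M borel (X i) = distr M borel (X 0)"
    and X_pos: "\<And>i \<omega>. \<omega> \<in> space M \<Longrightarrow> X i \<omega> > 0"
    and mean_X: "integral\<^sup>L M (X 0) = 1"
    and two_le_p: "2 \<le> p"
    and integrable_X_moment: "integrable M (\<lambda>\<omega>. X 0 \<omega> ^ (p + 2))"
begin

abbreviation dX :: "nat \<Rightarrow> nat \<Rightarrow> 'a \<Rightarrow> real" where
  "dX n i \<omega> \<equiv> damped_sq n (X i \<omega>)"

lemma X_measurable [measurable]: "X i \<in> borel_measurable M"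
  using indep unfolding indep_vars_def by auto

lemma X_nonneg: "\<omega> \<in> space M \<Longrightarrow> 0 \<le> X i \<omega>"
  using X_pos[of \<omega> i] by simp

lemma dX_nonneg: "\<omega> \<in> space M \<Longrightarrow> 0 \<le> dX n i \<omega>"
  by (intro damped_sq_nonneg X_nonneg)

lemma integral_comp_X:
  fixes g :: "real \<Rightarrow> real"
  assumes [measurable]: "g \<in> borel_measurable borel"
  shows "(\<integral>\<omega>. g (X i \<omega>) \<partial>M) = (\<integral>\<omega>. g (X 0 \<omega>) \<partial>M)"
  using integral_distr[of "X i" M borel g] integral_distr[of "X 0" M borel g]
  by (simp add: identically_distributed[of i])

lemma integrable_comp_X_iff:
  fixes g :: "real \<Rightarrow> real"
  assumes [measurable]: "g \<in> borel_measurable borel"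
  shows "integrable M (\<lambda>\<omega>. g (X i \<omega>)) \<longleftrightarrow> integrable M (\<lambda>\<omega>. g (X 0 \<omega>))"
  using integrable_distr_eq[of "X i" M borel g] integrable_distr_eq[of "X 0" M borel g]
  by (simp add: identically_distributed[of i])

definition moment_bound :: real where
  "moment_bound = 1 + integral\<^sup>L M (\<lambda>\<omega>. X 0 \<omega> ^ (p + 2))"

lemma integrable_X_power:
  assumes "j \<le> p + 2"
  shows "integrable M (\<lambda>\<omega>. X i \<omega> ^ j)"
proof (rule Bochner_Integration.integrable_bound)
  show "integrable M (\<lambda>\<omega>. 1 + X i \<omega> ^ (p + 2))"
    using integrable_comp_X_iff[of "\<lambda>y. y ^ (p + 2)" i] integrable_X_moment by simp
  show "AE \<omega> in M. norm (X i \<omega> ^ j) \<le> norm (1 + X i \<omega> ^ (p + 2))"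
  proof (rule AE_I2)
    fix \<omega> assume "\<omega> \<in> space M"
    then have "0 \<le> X i \<omega>"
      by (rule X_nonneg)
    then show "norm (X i \<omega> ^ j) \<le> norm (1 + X i \<omega> ^ (p + 2))"
      using power_le_one_add_power[OF _ assms] by simp
  qed
qed simp

lemma integral_X_power_le:
  assumes "j \<le> p + 2"
  shows "integral\<^sup>L M (\<lambda>\<omega>. X i \<omega> ^ j) \<le> moment_bound"
proof -
  have "integral\<^sup>L M (\<lambda>\<omega>. X i \<omega> ^ j) \<le> integral\<^sup>L M (\<lambda>\<omega>. 1 + X i \<omega> ^ (p + 2))"
    using assms X_nonneg
    by (intro integral_mono integrable_X_power power_le_one_add_power Bochner_Integration.integrable_add)
      auto
  also have "\<dots> = moment_bound"
    using integrable_X_power[of "p + 2" i] integral_comp_X[of "\<lambda>y. y ^ (p + 2)" i]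
    by (simp add: moment_bound_def prob_space)
  finally show ?thesis .
qed

lemma one_le_moment_bound: "1 \<le> moment_bound"
  unfolding moment_bound_def using X_nonneg by (simp add: integral_nonneg_AE)

lemma integral_X: "integral\<^sup>L M (X i) = 1"
  using integral_comp_X[of "\<lambda>y. y" i] mean_X by simp

lemma integrable_sum_X_power:
  assumes "finite J" "j \<le> p + 2"
  shows "integrable M (\<lambda>\<omega>. (\<Sum>i\<in>J. X i \<omega>) ^ j)"
proof (cases "J = {}")
  case False
  show ?thesis
  proof (rule Bochner_Integration.integrable_bound)
    show "integrable M (\<lambda>\<omega>. real (card J) ^ j * (\<Sum>i\<in>J. X i \<omega> ^ j))"
      using integrable_X_power assms by auto
    show "AE \<omega> in M. norm ((\<Sum>i\<in>J. X i \<omega>) ^ j) \<le> norm (real (card J) ^ j * (\<Sum>i\<in>J. X i \<omega> ^ j))"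
    proof (rule AE_I2)
      fix \<omega> assume "\<omega> \<in> space M"
      then have "\<And>i. 0 \<le> X i \<omega>"
        by (rule X_nonneg)
      then show "norm ((\<Sum>i\<in>J. X i \<omega>) ^ j) \<le> norm (real (card J) ^ j * (\<Sum>i\<in>J. X i \<omega> ^ j))"
        using sum_power_le_card_power[OF assms(1) False, of "\<lambda>i. X i \<omega>" j] by (simp add: sum_nonneg)
    qed
  qed simp
qed simp

lemma integrable_dominated_by_sum_X_power:
  assumes "finite J" "j \<le> p + 2" "f \<in> borel_measurable M"
    and "\<And>\<omega>. \<omega> \<in> space M \<Longrightarrow> \<bar>f \<omega>\<bar> \<le> C * (\<Sum>i\<in>J. X i \<omega>) ^ j"
  shows "integrable M f"
proof (rule Bochner_Integration.integrable_bound)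
  show "integrable M (\<lambda>\<omega>. C * (\<Sum>i\<in>J. X i \<omega>) ^ j)"
    using integrable_sum_X_power[OF assms(1,2)] by simp
  show "AE \<omega> in M. norm (f \<omega>) \<le> norm (C * (\<Sum>i\<in>J. X i \<omega>) ^ j)"
    using assms(4) by (auto intro!: AE_I2 order.trans[OF _ abs_ge_self])
qed fact

lemma integral_mult_indep_blocks:
  fixes F G :: "(nat \<Rightarrow> real) \<Rightarrow> real"
  assumes "K \<inter> L = {}"
    and [measurable]: "F \<in> borel_measurable (PiM K (\<lambda>_. borel))" "G \<in> borel_measurable (PiM L (\<lambda>_. borel))"
    and "integrable M (\<lambda>\<omega>. F (restrict (\<lambda>i. X i \<omega>) K))"
    and "integrable M (\<lambda>\<omega>. G (restrict (\<lambda>i. X i \<omega>) L))"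
  shows "integrable M (\<lambda>\<omega>. F (restrict (\<lambda>i. X i \<omega>) K) * G (restrict (\<lambda>i. X i \<omega>) L))"
    and "(\<integral>\<omega>. F (restrict (\<lambda>i. X i \<omega>) K) * G (restrict (\<lambda>i. X i \<omega>) L) \<partial>M)
      = (\<integral>\<omega>. F (restrict (\<lambda>i. X i \<omega>) K) \<partial>M) * (\<integral>\<omega>. G (restrict (\<lambda>i. X i \<omega>) L) \<partial>M)"
proof -
  have "indep_var (PiM K (\<lambda>_. borel)) (\<lambda>\<omega>. restrict (\<lambda>i. X i \<omega>) K)
      (PiM L (\<lambda>_. borel)) (\<lambda>\<omega>. restrict (\<lambda>i. X i \<omega>) L)"
    using indep_var_restrict[OF indep assms(1)] by auto
  from indep_var_compose[OF this assms(2,3)]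
  have indep_FG: "indep_var borel (\<lambda>\<omega>. F (restrict (\<lambda>i. X i \<omega>) K)) borel (\<lambda>\<omega>. G (restrict (\<lambda>i. X i \<omega>) L))"
    by (simp add: comp_def)
  show "integrable M (\<lambda>\<omega>. F (restrict (\<lambda>i. X i \<omega>) K) * G (restrict (\<lambda>i. X i \<omega>) L))"
    using indep_var_integrable[OF indep_FG assms(4,5)] by simp
  show "(\<integral>\<omega>. F (restrict (\<lambda>i. X i \<omega>) K) * G (restrict (\<lambda>i. X i \<omega>) L) \<partial>M)
      = (\<integral>\<omega>. F (restrict (\<lambda>i. X i \<omega>) K) \<partial>M) * (\<integral>\<omega>. G (restrict (\<lambda>i. X i \<omega>) L) \<partial>M)"
    using indep_var_lebesgue_integral[OF indep_FG assms(4,5)] by simp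
qed

lemma integrable_dX_power:
  assumes "0 < n" "1 \<le> k" "k \<le> p + 1"
  shows "integrable M (\<lambda>\<omega>. dX n i \<omega> ^ k)"
  using assms damped_sq_power_le[OF X_nonneg] damped_sq_nonneg[OF X_nonneg]
  by (intro integrable_dominated_by_sum_X_power[of "{i}" "k + 1" _ "real n ^ (k - 1)"]) auto

lemma integral_dX_power_le:
  assumes "0 < n" "1 \<le> k" "k \<le> p + 1"
  shows "integral\<^sup>L M (\<lambda>\<omega>. dX n i \<omega> ^ k) \<le> real n ^ (k - 1) * moment_bound"
proof -
  have "integral\<^sup>L M (\<lambda>\<omega>. dX n i \<omega> ^ k) \<le> integral\<^sup>L M (\<lambda>\<omega>. real n ^ (k - 1) * X i \<omega> ^ (k + 1))"
    using assms integrable_X_power[of "k + 1" i] damped_sq_power_le[OF X_nonneg]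
    by (intro integral_mono integrable_dX_power) auto
  also have "\<dots> \<le> real n ^ (k - 1) * moment_bound"
    using assms integral_X_power_le[of "k + 1" i] by (simp add: mult_left_mono)
  finally show ?thesis .
qed

lemma integral_dX_sq_le:
  assumes "0 < n"
  shows "integral\<^sup>L M (\<lambda>\<omega>. dX n i \<omega> ^ 2) \<le> moment_bound"
proof -
  have "integral\<^sup>L M (\<lambda>\<omega>. dX n i \<omega> ^ 2) \<le> integral\<^sup>L M (\<lambda>\<omega>. X i \<omega> ^ 4)"
  proof (intro integral_mono integrable_dX_power integrable_X_power assms)
    fix \<omega> assume "\<omega> \<in> space M"
    then have "dX n i \<omega> ^ 2 \<le> (X i \<omega> ^ 2) ^ 2"
      by (intro power_mono damped_sq_le_sq damped_sq_nonneg X_nonneg)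
    then show "dX n i \<omega> ^ 2 \<le> X i \<omega> ^ 4"
      by simp
  qed (use two_le_p in auto)
  also have "\<dots> \<le> moment_bound"
    using two_le_p by (intro integral_X_power_le) auto
  finally show ?thesis .
qed

lemma integrable_sum_dX_power:
  assumes "0 < n" "finite J" "q \<le> p + 2"
  shows "integrable M (\<lambda>\<omega>. (\<Sum>i\<in>J. dX n i \<omega>) ^ q)"
proof (rule integrable_dominated_by_sum_X_power[OF assms(2,3), of _ "real n ^ q"])
  fix \<omega> assume \<omega>: "\<omega> \<in> space M"
  have "(\<Sum>i\<in>J. dX n i \<omega>) \<le> real n * (\<Sum>i\<in>J. X i \<omega>)"
    unfolding sum_distrib_left using assms(1) by (intro sum_mono damped_sq_le_linear X_nonneg \<omega>)
  then have "(\<Sum>i\<in>J. dX n i \<omega>) ^ q \<le> (real n * (\<Sum>i\<in>J. X i \<omega>)) ^ q"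
    using \<omega> by (intro power_mono sum_nonneg dX_nonneg)
  then show "\<bar>(\<Sum>i\<in>J. dX n i \<omega>) ^ q\<bar> \<le> real n ^ q * (\<Sum>i\<in>J. X i \<omega>) ^ q"
    using \<omega> by (simp add: power_mult_distrib sum_nonneg dX_nonneg)
qed simp

section \<open>Moments of sums of damped squares\<close>

lemma integral_dX_power_mult_sum_dX_power:
  assumes "0 < n" "finite L" "i \<notin> L" "1 \<le> k" "k \<le> p + 1" "q \<le> p + 2"
  shows "integrable M (\<lambda>\<omega>. dX n i \<omega> ^ k * (\<Sum>j\<in>L. dX n j \<omega>) ^ q)"
    and "integral\<^sup>L M (\<lambda>\<omega>. dX n i \<omega> ^ k * (\<Sum>j\<in>L. dX n j \<omega>) ^ q)
      = integral\<^sup>L M (\<lambda>\<omega>. dX n i \<omega> ^ k) * integral\<^sup>L M (\<lambda>\<omega>. (\<Sum>j\<in>L. dX n j \<omega>) ^ q)"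
proof -
  define F where "F x = damped_sq n (x i) ^ k" for x :: "nat \<Rightarrow> real"
  define G where "G x = (\<Sum>j\<in>L. damped_sq n (x j)) ^ q" for x :: "nat \<Rightarrow> real"
  have F_X: "F (restrict (\<lambda>i. X i \<omega>) {i}) = dX n i \<omega> ^ k" for \<omega>
    by (simp add: F_def)
  have G_X: "G (restrict (\<lambda>i. X i \<omega>) L) = (\<Sum>j\<in>L. dX n j \<omega>) ^ q" for \<omega>
    by (simp add: G_def)
  have "{i} \<inter> L = {}"
    using assms(3) by auto
  moreover have "F \<in> borel_measurable (PiM {i} (\<lambda>_. borel))" "G \<in> borel_measurable (PiM L (\<lambda>_. borel))"
    unfolding F_def G_def by measurable
  moreover have "integrable M (\<lambda>\<omega>. F (restrict (\<lambda>i. X i \<omega>) {i}))"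
    unfolding F_X using assms by (intro integrable_dX_power)
  moreover have "integrable M (\<lambda>\<omega>. G (restrict (\<lambda>i. X i \<omega>) L))"
    unfolding G_X using assms by (intro integrable_sum_dX_power)
  ultimately show "integrable M (\<lambda>\<omega>. dX n i \<omega> ^ k * (\<Sum>j\<in>L. dX n j \<omega>) ^ q)"
    "integral\<^sup>L M (\<lambda>\<omega>. dX n i \<omega> ^ k * (\<Sum>j\<in>L. dX n j \<omega>) ^ q)
      = integral\<^sup>L M (\<lambda>\<omega>. dX n i \<omega> ^ k) * integral\<^sup>L M (\<lambda>\<omega>. (\<Sum>j\<in>L. dX n j \<omega>) ^ q)"
    using integral_mult_indep_blocks[of "{i}" L F G] unfolding F_X G_X by simp_all
qed

lemma dX_power_mult_sum_dX_power_le: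
  assumes "finite J" "i \<in> J" "\<omega> \<in> space M"
  shows "dX n i \<omega> ^ k * (\<Sum>j\<in>J. dX n j \<omega>) ^ q
    \<le> 2 ^ q * (dX n i \<omega> ^ (k + q) + dX n i \<omega> ^ k * (\<Sum>j\<in>J-{i}. dX n j \<omega>) ^ q)"
proof -
  have "(\<Sum>j\<in>J. dX n j \<omega>) = dX n i \<omega> + (\<Sum>j\<in>J-{i}. dX n j \<omega>)"
    using assms(1,2) by (simp add: sum.remove)
  then have "(\<Sum>j\<in>J. dX n j \<omega>) ^ q \<le> 2 ^ q * (dX n i \<omega> ^ q + (\<Sum>j\<in>J-{i}. dX n j \<omega>) ^ q)"
    using assms(3) by (simp add: power_add_le_two_power sum_nonneg dX_nonneg)
  then have "dX n i \<omega> ^ k * (\<Sum>j\<in>J. dX n j \<omega>) ^ q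
      \<le> dX n i \<omega> ^ k * (2 ^ q * (dX n i \<omega> ^ q + (\<Sum>j\<in>J-{i}. dX n j \<omega>) ^ q))"
    using assms(3) by (intro mult_left_mono zero_le_power dX_nonneg)
  then show ?thesis
    by (simp add: algebra_simps power_add)
qed

text \<open>Splitting off the \<open>i\<close>-th summand makes the two factors independent, at the price of
  the factor \<open>2 ^ q\<close>.\<close>

lemma integral_dX_power_mult_sum_dX_power_le:
  assumes "0 < n" "finite J" "i \<in> J" "1 \<le> k" "k + q \<le> p + 1"
    and rest: "integral\<^sup>L M (\<lambda>\<omega>. (\<Sum>j\<in>J-{i}. dX n j \<omega>) ^ q) \<le> B"
  shows "integrable M (\<lambda>\<omega>. dX n i \<omega> ^ k * (\<Sum>j\<in>J. dX n j \<omega>) ^ q)"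
    and "integral\<^sup>L M (\<lambda>\<omega>. dX n i \<omega> ^ k * (\<Sum>j\<in>J. dX n j \<omega>) ^ q)
      \<le> 2 ^ q * (integral\<^sup>L M (\<lambda>\<omega>. dX n i \<omega> ^ (k + q)) + integral\<^sup>L M (\<lambda>\<omega>. dX n i \<omega> ^ k) * B)"
proof -
  note indep_rest = integral_dX_power_mult_sum_dX_power[OF assms(1), of "J - {i}" i k q]
  define D where
    "D \<omega> = 2 ^ q * (dX n i \<omega> ^ (k + q) + dX n i \<omega> ^ k * (\<Sum>j\<in>J-{i}. dX n j \<omega>) ^ q)" for \<omega>
  have D_integrable: "integrable M D"
    unfolding D_def using assms indep_rest(1)
    by (intro integrable_mult_right Bochner_Integration.integrable_add integrable_dX_power) auto
  have le_D: "0 \<le> dX n i \<omega> ^ k * (\<Sum>j\<in>J. dX n j \<omega>) ^ q \<and> dX n i \<omega> ^ k * (\<Sum>j\<in>J. dX n j \<omega>) ^ q \<le> D \<omega>"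
    if \<omega>: "\<omega> \<in> space M" for \<omega>
  proof
    show "0 \<le> dX n i \<omega> ^ k * (\<Sum>j\<in>J. dX n j \<omega>) ^ q"
      using \<omega> by (simp add: sum_nonneg dX_nonneg)
    show "dX n i \<omega> ^ k * (\<Sum>j\<in>J. dX n j \<omega>) ^ q \<le> D \<omega>"
      unfolding D_def using assms(2,3) \<omega> by (rule dX_power_mult_sum_dX_power_le)
  qed
  show "integrable M (\<lambda>\<omega>. dX n i \<omega> ^ k * (\<Sum>j\<in>J. dX n j \<omega>) ^ q)"
    using le_D by (intro Bochner_Integration.integrable_bound[OF D_integrable])
      (auto intro!: AE_I2 order.trans[OF _ abs_ge_self])
  have "integral\<^sup>L M (\<lambda>\<omega>. dX n i \<omega> ^ k * (\<Sum>j\<in>J. dX n j \<omega>) ^ q) \<le> integral\<^sup>L M D"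
    using le_D by (intro integral_mono' D_integrable) (auto intro: order.trans)
  also have "\<dots> = 2 ^ q * (integral\<^sup>L M (\<lambda>\<omega>. dX n i \<omega> ^ (k + q))
      + integral\<^sup>L M (\<lambda>\<omega>. dX n i \<omega> ^ k) * integral\<^sup>L M (\<lambda>\<omega>. (\<Sum>j\<in>J-{i}. dX n j \<omega>) ^ q))"
    unfolding D_def using assms indep_rest by (simp add: integrable_dX_power)
  also have "\<dots> \<le> 2 ^ q * (integral\<^sup>L M (\<lambda>\<omega>. dX n i \<omega> ^ (k + q)) + integral\<^sup>L M (\<lambda>\<omega>. dX n i \<omega> ^ k) * B)"
    using rest by (intro mult_left_mono add_left_mono integral_nonneg_AE AE_I2 zero_le_power dX_nonneg) auto
  finally show "integral\<^sup>L M (\<lambda>\<omega>. dX n i \<omega> ^ k * (\<Sum>j\<in>J. dX n j \<omega>) ^ q)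
      \<le> 2 ^ q * (integral\<^sup>L M (\<lambda>\<omega>. dX n i \<omega> ^ (k + q)) + integral\<^sup>L M (\<lambda>\<omega>. dX n i \<omega> ^ k) * B)" .
qed

lemma sum_dX_power_moment:
  assumes "q \<le> p"
  shows "\<exists>K \<ge> 0. \<forall>n > 0. \<forall>J \<subseteq> {1..n}.
    integral\<^sup>L M (\<lambda>\<omega>. (\<Sum>i\<in>J. dX n i \<omega>) ^ q) \<le> K * real n ^ q"
  using assms
proof (induction q)
  case 0
  show ?case
    by (intro exI[of _ 1]) (simp add: prob_space)
next
  case (Suc q)
  then obtain K where K: "0 \<le> K"
    "\<And>n J. 0 < n \<Longrightarrow> J \<subseteq> {1..n} \<Longrightarrow> integral\<^sup>L M (\<lambda>\<omega>. (\<Sum>i\<in>J. dX n i \<omega>) ^ q) \<le> K * real n ^ q"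
    by auto
  define K' where "K' = 2 ^ q * moment_bound * (1 + K)"
  have "integral\<^sup>L M (\<lambda>\<omega>. (\<Sum>i\<in>J. dX n i \<omega>) ^ Suc q) \<le> K' * real n ^ Suc q"
    if n: "0 < n" and J: "J \<subseteq> {1..n}" for n J
  proof -
    have J_finite: "finite J"
      using J finite_subset by blast
    have rest: "integral\<^sup>L M (\<lambda>\<omega>. (\<Sum>j\<in>J-{i}. dX n j \<omega>) ^ q) \<le> K * real n ^ q" for i
      using J n by (intro K(2)) auto
    note split = integral_dX_power_mult_sum_dX_power_le[where k = 1, OF n J_finite _ _ _ rest, simplified]
    have "integral\<^sup>L M (\<lambda>\<omega>. (\<Sum>i\<in>J. dX n i \<omega>) ^ Suc q)
        = (\<Sum>i\<in>J. integral\<^sup>L M (\<lambda>\<omega>. dX n i \<omega> * (\<Sum>j\<in>J. dX n j \<omega>) ^ q))"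
      using Suc.prems split(1) by (simp add: sum_distrib_right)
    also have "\<dots> \<le> (\<Sum>i\<in>J. 2 ^ q * (real n ^ q * moment_bound + moment_bound * (K * real n ^ q)))"
    proof (rule sum_mono)
      fix i assume i: "i \<in> J"
      have "integral\<^sup>L M (\<lambda>\<omega>. dX n i \<omega> ^ Suc q) \<le> real n ^ q * moment_bound"
        using Suc.prems n integral_dX_power_le[of n "Suc q" i] by simp
      moreover have "integral\<^sup>L M (\<lambda>\<omega>. dX n i \<omega>) * (K * real n ^ q) \<le> moment_bound * (K * real n ^ q)"
        using n integral_dX_power_le[of n 1 i] K(1) by (intro mult_right_mono) auto
      ultimately show "integral\<^sup>L M (\<lambda>\<omega>. dX n i \<omega> * (\<Sum>j\<in>J. dX n j \<omega>) ^ q)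
          \<le> 2 ^ q * (real n ^ q * moment_bound + moment_bound * (K * real n ^ q))"
        using Suc.prems by (intro order.trans[OF split(2)[OF i]]) auto
    qed
    also have "\<dots> = real (card J) * (K' * real n ^ q)"
      by (simp add: K'_def algebra_simps)
    also have "\<dots> \<le> real n * (K' * real n ^ q)"
      using J K(1) one_le_moment_bound card_mono[OF _ J]
      by (intro mult_right_mono) (auto simp: K'_def)
    finally show ?thesis
      by (simp add: algebra_simps)
  qed
  moreover have "0 \<le> K'"
    using K(1) one_le_moment_bound by (simp add: K'_def)
  ultimately show ?case
    by blast
qed

lemma integrable_sum_dX_sq_mult_power:
  assumes "0 < n"
  shows "integrable M (\<lambda>\<omega>. (\<Sum>i\<in>{1..n}. dX n i \<omega> ^ 2) * (\<Sum>i\<in>{1..n}. dX n i \<omega>) ^ (p - 1))"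
proof -
  have "2 + (p - 1) = p + 1"
    using two_le_p by simp
  then have summand: "integrable M (\<lambda>\<omega>. dX n i \<omega> ^ 2 * (\<Sum>j\<in>{1..n}. dX n j \<omega>) ^ (p - 1))"
    if "i \<in> {1..n}" for i
    by (intro integral_dX_power_mult_sum_dX_power_le(1)[OF assms finite_atLeastAtMost that,
        where B = "integral\<^sup>L M (\<lambda>\<omega>. (\<Sum>j\<in>{1..n}-{i}. dX n j \<omega>) ^ (p - 1))"]) auto
  show ?thesis
    unfolding sum_distrib_right by (rule Bochner_Integration.integrable_sum) (rule summand)
qed

lemma sum_dX_sq_mult_power_moment:
  "\<exists>K \<ge> 0. \<forall>n > 0.
    integral\<^sup>L M (\<lambda>\<omega>. (\<Sum>i\<in>{1..n}. dX n i \<omega> ^ 2) * (\<Sum>i\<in>{1..n}. dX n i \<omega>) ^ (p - 1))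
      \<le> K * (real n * integral\<^sup>L M (\<lambda>\<omega>. dX n 1 \<omega> ^ (p + 1)) + real n ^ p)"
proof -
  obtain K where K: "0 \<le> K" "\<And>n J. 0 < n \<Longrightarrow> J \<subseteq> {1..n} \<Longrightarrow>
      integral\<^sup>L M (\<lambda>\<omega>. (\<Sum>i\<in>J. dX n i \<omega>) ^ (p - 1)) \<le> K * real n ^ (p - 1)"
    using sum_dX_power_moment[of "p - 1"] by auto
  define K' where "K' = 2 ^ (p - 1) * (1 + moment_bound * K)"
  have "integral\<^sup>L M (\<lambda>\<omega>. (\<Sum>i\<in>{1..n}. dX n i \<omega> ^ 2) * (\<Sum>i\<in>{1..n}. dX n i \<omega>) ^ (p - 1))
      \<le> K' * (real n * integral\<^sup>L M (\<lambda>\<omega>. dX n 1 \<omega> ^ (p + 1)) + real n ^ p)"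
    if n: "0 < n" for n
  proof -
    define E1 where "E1 = integral\<^sup>L M (\<lambda>\<omega>. dX n 1 \<omega> ^ (p + 1))"
    have exponent: "2 + (p - 1) = p + 1"
      using two_le_p by simp
    have rest: "integral\<^sup>L M (\<lambda>\<omega>. (\<Sum>j\<in>{1..n}-{i}. dX n j \<omega>) ^ (p - 1)) \<le> K * real n ^ (p - 1)" for i
      using n by (intro K(2)) auto
    note split = integral_dX_power_mult_sum_dX_power_le[where k = 2 and q = "p - 1",
        OF n finite_atLeastAtMost _ _ _ rest, unfolded exponent]
    have E1: "integral\<^sup>L M (\<lambda>\<omega>. dX n i \<omega> ^ (p + 1)) = E1" for i
      unfolding E1_def
      using integral_comp_X[of "\<lambda>y. damped_sq n y ^ (p + 1)" i]
        integral_comp_X[of "\<lambda>y. damped_sq n y ^ (p + 1)" 1]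
      by simp
    have "integral\<^sup>L M (\<lambda>\<omega>. (\<Sum>i\<in>{1..n}. dX n i \<omega> ^ 2) * (\<Sum>i\<in>{1..n}. dX n i \<omega>) ^ (p - 1))
        = (\<Sum>i\<in>{1..n}. integral\<^sup>L M (\<lambda>\<omega>. dX n i \<omega> ^ 2 * (\<Sum>j\<in>{1..n}. dX n j \<omega>) ^ (p - 1)))"
      using split(1) by (simp add: sum_distrib_right)
    also have "\<dots> \<le> (\<Sum>i\<in>{1..n}. 2 ^ (p - 1) * (E1 + moment_bound * (K * real n ^ (p - 1))))"
    proof (rule sum_mono)
      fix i assume i: "i \<in> {1..n}"
      have "integral\<^sup>L M (\<lambda>\<omega>. dX n i \<omega> ^ 2) * (K * real n ^ (p - 1))
          \<le> moment_bound * (K * real n ^ (p - 1))"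
        using integral_dX_sq_le[OF n, of i] K(1) by (intro mult_right_mono) auto
      then show "integral\<^sup>L M (\<lambda>\<omega>. dX n i \<omega> ^ 2 * (\<Sum>j\<in>{1..n}. dX n j \<omega>) ^ (p - 1))
          \<le> 2 ^ (p - 1) * (E1 + moment_bound * (K * real n ^ (p - 1)))"
        using E1[of i] two_le_p by (intro order.trans[OF split(2)[OF i]]) auto
    qed
    also have "\<dots> = 2 ^ (p - 1) * (real n * E1 + moment_bound * K * real n ^ p)"
      using two_le_p by (simp add: algebra_simps power_eq_if[of "real n" p])
    also have "\<dots> \<le> K' * (real n * E1 + real n ^ p)"
    proof -
      have "0 \<le> E1"
        unfolding E1_def by (intro integral_nonneg_AE AE_I2 zero_le_power dX_nonneg)
      then have "0 \<le> 2 ^ (p - 1) * (real n ^ p + moment_bound * K * (real n * E1))"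
        using K(1) one_le_moment_bound by simp
      then show ?thesis
        by (simp add: K'_def algebra_simps)
    qed
    finally show ?thesis
      unfolding E1_def .
  qed
  moreover have "0 \<le> K'"
    using K(1) one_le_moment_bound by (simp add: K'_def)
  ultimately show ?thesis
    by blast
qed

section \<open>The maximum and tuples of indices\<close>

lemma maxX_measurable [measurable]: "maxX X n \<in> borel_measurable M"
proof -
  have "(\<lambda>\<omega>. Max ((\<lambda>i. X i \<omega>) ` {1..n})) \<in> borel_measurable M"
    by (rule borel_measurable_Max) auto
  then show ?thesis
    unfolding maxX_def[abs_def] .
qed

lemma maxX_nonneg: "0 < n \<Longrightarrow> \<omega> \<in> space M \<Longrightarrow> 0 \<le> maxX X n \<omega>"
  using le_maxX[of 1 n X \<omega>] X_nonneg[of \<omega> 1] by simp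

lemma integrable_maxX_sq:
  assumes "0 < n"
  shows "integrable M (\<lambda>\<omega>. (maxX X n \<omega>)\<^sup>2)"
proof (rule integrable_dominated_by_sum_X_power[of "{1..n}" 2 _ 1])
  fix \<omega> assume \<omega>: "\<omega> \<in> space M"
  have "(maxX X n \<omega>)\<^sup>2 \<le> (psum X n \<omega>)\<^sup>2"
    using \<omega> assms by (intro power_mono maxX_le_psum maxX_nonneg X_nonneg)
  then show "\<bar>(maxX X n \<omega>)\<^sup>2\<bar> \<le> 1 * (\<Sum>i\<in>{1..n}. X i \<omega>) ^ 2"
    unfolding psum_def by simp
qed (use two_le_p in auto)

lemma one_le_integral_maxX_sq:
  assumes "0 < n"
  shows "1 \<le> integral\<^sup>L M (\<lambda>\<omega>. (maxX X n \<omega>)\<^sup>2)"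
proof -
  have "integral\<^sup>L M (\<lambda>\<omega>. 2 * X 1 \<omega> - 1) \<le> integral\<^sup>L M (\<lambda>\<omega>. (maxX X n \<omega>)\<^sup>2)"
  proof (rule integral_mono)
    show "integrable M (\<lambda>\<omega>. 2 * X 1 \<omega> - 1)"
      using integrable_X_power[of 1 1] by simp
    fix \<omega> assume \<omega>: "\<omega> \<in> space M"
    have "(X 1 \<omega>)\<^sup>2 \<le> (maxX X n \<omega>)\<^sup>2"
      using assms \<omega> by (intro power_mono le_maxX X_nonneg) auto
    moreover have "2 * X 1 \<omega> - 1 \<le> (X 1 \<omega>)\<^sup>2"
      using zero_le_power2[of "X 1 \<omega> - 1"] by (simp add: power2_diff)
    ultimately show "2 * X 1 \<omega> - 1 \<le> (maxX X n \<omega>)\<^sup>2"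
      by simp
  qed (rule integrable_maxX_sq[OF assms])
  also have "integral\<^sup>L M (\<lambda>\<omega>. 2 * X 1 \<omega> - 1) = 1"
    using integrable_X_power[of 1 1] integral_X[of 1] by (simp add: prob_space)
  finally show ?thesis .
qed

definition max_sq_outside :: "nat \<Rightarrow> (nat \<Rightarrow> nat) \<Rightarrow> 'a \<Rightarrow> real" where
  "max_sq_outside n f \<omega> = Max ((\<lambda>j. (X j \<omega>)\<^sup>2) ` ({1..n} - f ` {..<p}))"

lemma outside_tuple_nonempty:
  assumes "p < n"
  shows "{1..n} - f ` {..<p} \<noteq> {}"
proof
  assume "{1..n} - f ` {..<p} = {}"
  then have "card {1..n} \<le> card (f ` {..<p})"
    by (intro card_mono) auto
  also have "\<dots> \<le> p"
    using card_image_le[of "{..<p}" f] by simp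
  finally show False
    using assms by simp
qed

lemma sq_le_max_sq_outside: "j \<in> {1..n} - f ` {..<p} \<Longrightarrow> (X j \<omega>)\<^sup>2 \<le> max_sq_outside n f \<omega>"
  unfolding max_sq_outside_def by (rule Max_ge) auto

lemma max_sq_outside_nonneg: "p < n \<Longrightarrow> 0 \<le> max_sq_outside n f \<omega>"
  using outside_tuple_nonempty[of n f] sq_le_max_sq_outside[of _ n f \<omega>]
  by (metis all_not_in_conv order.trans zero_le_power2)

lemma max_sq_outside_le:
  assumes "p < n" "\<omega> \<in> space M"
  shows "max_sq_outside n f \<omega> \<le> (maxX X n \<omega>)\<^sup>2"
  unfolding max_sq_outside_def
  using assms outside_tuple_nonempty[of n f]
  by (subst Max_le_iff) (auto intro!: power_mono le_maxX X_nonneg)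

lemma sq_maxX_div_le_tuple:
  assumes "p < n" "\<omega> \<in> space M"
  shows "(maxX X n \<omega>)\<^sup>2 / (1 + psum X n \<omega> / real n)
    \<le> (\<Sum>l<p. dX n (f l) \<omega>) + max_sq_outside n f \<omega>"
proof -
  have n: "0 < n"
    using assms(1) by simp
  from maxX_attained[OF n]
  obtain k where k: "k \<in> {1..n}" "maxX X n \<omega> = X k \<omega>" ..
  have X_k: "0 \<le> X k \<omega>" "X k \<omega> \<le> psum X n \<omega>"
    using k assms(2) n maxX_le_psum[OF n, of X \<omega>] X_nonneg by auto
  have tuple_nonneg: "0 \<le> (\<Sum>l<p. dX n (f l) \<omega>)"
    using assms(2) by (intro sum_nonneg dX_nonneg)
  have outside_nonneg: "0 \<le> max_sq_outside n f \<omega>"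
    using assms(1) by (rule max_sq_outside_nonneg)
  consider "k \<in> f ` {..<p}" | "k \<in> {1..n} - f ` {..<p}"
    using k(1) by blast
  then show ?thesis
  proof cases
    case 1
    then obtain l where l: "l < p" "f l = k"
      by auto
    have "(X k \<omega>)\<^sup>2 / (1 + psum X n \<omega> / real n) \<le> dX n k \<omega>"
      using X_k by (rule sq_div_le_damped_sq)
    also have "\<dots> \<le> (\<Sum>l<p. dX n (f l) \<omega>)"
      using l assms(2) member_le_sum[of l "{..<p}" "\<lambda>l. dX n (f l) \<omega>"] by (auto intro: dX_nonneg)
    finally show ?thesis
      using outside_nonneg k(2) by simp
  next
    case 2
    have "1 \<le> 1 + psum X n \<omega> / real n"
      using X_k by simp
    then have "(X k \<omega>)\<^sup>2 / (1 + psum X n \<omega> / real n) \<le> (X k \<omega>)\<^sup>2"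
      by (simp add: divide_le_eq mult_le_cancel_left1)
    also have "\<dots> \<le> max_sq_outside n f \<omega>"
      using 2 by (rule sq_le_max_sq_outside)
    finally show ?thesis
      using tuple_nonneg k(2) by simp
  qed
qed

definition tuple_majorant :: "nat \<Rightarrow> 'a \<Rightarrow> real" where
  "tuple_majorant n \<omega> = (\<Sum>f\<in>PiE {..<p} (\<lambda>_. {1..n}).
     (\<Prod>l<p. dX n (f l) \<omega>) * ((\<Sum>l<p. dX n (f l) \<omega>) + max_sq_outside n f \<omega>))"

lemma sum_dX_power_mult_sq_maxX_le:
  assumes "p < n" "\<omega> \<in> space M"
  shows "(\<Sum>i\<in>{1..n}. dX n i \<omega>) ^ p * (maxX X n \<omega>)\<^sup>2 / (1 + psum X n \<omega> / real n)
    \<le> tuple_majorant n \<omega>"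
proof -
  have "(\<Sum>i\<in>{1..n}. dX n i \<omega>) ^ p * (maxX X n \<omega>)\<^sup>2 / (1 + psum X n \<omega> / real n)
      = (\<Sum>f\<in>PiE {..<p} (\<lambda>_. {1..n}).
          (\<Prod>l<p. dX n (f l) \<omega>) * ((maxX X n \<omega>)\<^sup>2 / (1 + psum X n \<omega> / real n)))"
    by (simp add: power_sum_eq_sum_PiE sum_distrib_right sum_divide_distrib)
  also have "\<dots> \<le> tuple_majorant n \<omega>"
    unfolding tuple_majorant_def using assms
    by (intro sum_mono mult_left_mono sq_maxX_div_le_tuple prod_nonneg dX_nonneg)
  finally show ?thesis .
qed

lemma tuple_majorant_nonneg: "p < n \<Longrightarrow> \<omega> \<in> space M \<Longrightarrow> 0 \<le> tuple_majorant n \<omega>"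
  unfolding tuple_majorant_def
  by (intro sum_nonneg mult_nonneg_nonneg add_nonneg_nonneg prod_nonneg dX_nonneg
      max_sq_outside_nonneg)

lemma integrable_prod_dX:
  assumes "0 < n" "f \<in> PiE {..<p} (\<lambda>_. {1..n})"
  shows "integrable M (\<lambda>\<omega>. \<Prod>l<p. dX n (f l) \<omega>)"
proof (rule integrable_dominated_by_sum_X_power[of "{1..n}" p _ "real n ^ p"])
  show "(\<lambda>\<omega>. \<Prod>l<p. dX n (f l) \<omega>) \<in> borel_measurable M"
    by measurable
next
  fix \<omega> assume \<omega>: "\<omega> \<in> space M"
  have "(\<Prod>l<p. dX n (f l) \<omega>) \<le> (\<Prod>l<p. real n * (\<Sum>i\<in>{1..n}. X i \<omega>))"
  proof (rule prod_mono)
    fix l assume "l \<in> {..<p}"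
    then have "f l \<in> {1..n}"
      using assms(2) by (rule PiE_mem[rotated])
    then have "X (f l) \<omega> \<le> (\<Sum>i\<in>{1..n}. X i \<omega>)"
      by (rule member_le_sum) (auto intro: X_nonneg[OF \<omega>])
    then have "real n * X (f l) \<omega> \<le> real n * (\<Sum>i\<in>{1..n}. X i \<omega>)"
      by (rule mult_left_mono) simp
    moreover have "dX n (f l) \<omega> \<le> real n * X (f l) \<omega>"
      using \<omega> assms(1) by (intro damped_sq_le_linear X_nonneg)
    ultimately show "0 \<le> dX n (f l) \<omega> \<and> dX n (f l) \<omega> \<le> real n * (\<Sum>i\<in>{1..n}. X i \<omega>)"
      using dX_nonneg[OF \<omega>] by simp
  qed
  then show "\<bar>\<Prod>l<p. dX n (f l) \<omega>\<bar> \<le> real n ^ p * (\<Sum>i\<in>{1..n}. X i \<omega>) ^ p"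
    using \<omega> by (simp add: prod_nonneg dX_nonneg power_mult_distrib)
qed auto

lemma integrable_max_sq_outside:
  assumes "p < n"
  shows "integrable M (\<lambda>\<omega>. max_sq_outside n f \<omega>)"
proof (rule Bochner_Integration.integrable_bound[OF integrable_maxX_sq])
  show "(\<lambda>\<omega>. max_sq_outside n f \<omega>) \<in> borel_measurable M"
    unfolding max_sq_outside_def by (rule borel_measurable_Max) auto
  show "AE \<omega> in M. norm (max_sq_outside n f \<omega>) \<le> norm ((maxX X n \<omega>)\<^sup>2)"
    using assms max_sq_outside_le max_sq_outside_nonneg by (auto intro!: AE_I2)
qed (use assms in simp)

lemma integral_prod_dX_mult_max_sq_outside:
  assumes "p < n" "f \<in> PiE {..<p} (\<lambda>_. {1..n})"
  shows "integrable M (\<lambda>\<omega>. (\<Prod>l<p. dX n (f l) \<omega>) * max_sq_outside n f \<omega>)"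
    and "integral\<^sup>L M (\<lambda>\<omega>. (\<Prod>l<p. dX n (f l) \<omega>) * max_sq_outside n f \<omega>)
      \<le> integral\<^sup>L M (\<lambda>\<omega>. \<Prod>l<p. dX n (f l) \<omega>) * integral\<^sup>L M (\<lambda>\<omega>. (maxX X n \<omega>)\<^sup>2)"
proof -
  define K where "K = f ` {..<p}"
  define L where "L = {1..n} - K"
  define F where "F x = (\<Prod>l<p. damped_sq n (x (f l)))" for x :: "nat \<Rightarrow> real"
  define G where "G x = Max ((\<lambda>j. (x j)\<^sup>2) ` L)" for x :: "nat \<Rightarrow> real"
  have n: "0 < n"
    using assms(1) by simp
  have F_X: "F (restrict (\<lambda>i. X i \<omega>) K) = (\<Prod>l<p. dX n (f l) \<omega>)" for \<omega>
    unfolding F_def K_def by (auto intro!: prod.cong)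
  have G_X: "G (restrict (\<lambda>i. X i \<omega>) L) = max_sq_outside n f \<omega>" for \<omega>
    unfolding G_def max_sq_outside_def L_def K_def by (intro arg_cong[where f = Max] image_cong) auto
  have F_measurable: "F \<in> borel_measurable (PiM K (\<lambda>_. borel))"
    unfolding F_def by measurable (auto simp: K_def)
  have G_measurable: "G \<in> borel_measurable (PiM L (\<lambda>_. borel))"
    unfolding G_def by (rule borel_measurable_Max) (auto simp: L_def)
  have F_integrable: "integrable M (\<lambda>\<omega>. F (restrict (\<lambda>i. X i \<omega>) K))"
    unfolding F_X using n assms(2) by (rule integrable_prod_dX)
  have G_integrable: "integrable M (\<lambda>\<omega>. G (restrict (\<lambda>i. X i \<omega>) L))"
    unfolding G_X using assms(1) by (rule integrable_max_sq_outside)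
  have "K \<inter> L = {}"
    unfolding L_def by auto
  note blocks = integral_mult_indep_blocks[OF this F_measurable G_measurable F_integrable G_integrable,
      unfolded F_X G_X]
  show "integrable M (\<lambda>\<omega>. (\<Prod>l<p. dX n (f l) \<omega>) * max_sq_outside n f \<omega>)"
    using blocks(1) by simp
  have "integral\<^sup>L M (\<lambda>\<omega>. (\<Prod>l<p. dX n (f l) \<omega>) * max_sq_outside n f \<omega>)
      = integral\<^sup>L M (\<lambda>\<omega>. \<Prod>l<p. dX n (f l) \<omega>) * integral\<^sup>L M (\<lambda>\<omega>. max_sq_outside n f \<omega>)"
    using blocks(2) by simp
  also have "\<dots> \<le> integral\<^sup>L M (\<lambda>\<omega>. \<Prod>l<p. dX n (f l) \<omega>) * integral\<^sup>L M (\<lambda>\<omega>. (maxX X n \<omega>)\<^sup>2)"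
    using G_integrable n assms(1) unfolding G_X
    by (intro mult_left_mono integral_mono integrable_maxX_sq max_sq_outside_le
        integral_nonneg_AE AE_I2 prod_nonneg dX_nonneg) auto
  finally show "integral\<^sup>L M (\<lambda>\<omega>. (\<Prod>l<p. dX n (f l) \<omega>) * max_sq_outside n f \<omega>)
      \<le> integral\<^sup>L M (\<lambda>\<omega>. \<Prod>l<p. dX n (f l) \<omega>) * integral\<^sup>L M (\<lambda>\<omega>. (maxX X n \<omega>)\<^sup>2)" .
qed

lemma tuple_majorant_eq:
  "tuple_majorant n \<omega> = real p * ((\<Sum>i\<in>{1..n}. dX n i \<omega> ^ 2) * (\<Sum>i\<in>{1..n}. dX n i \<omega>) ^ (p - 1))
    + (\<Sum>f\<in>PiE {..<p} (\<lambda>_. {1..n}). (\<Prod>l<p. dX n (f l) \<omega>) * max_sq_outside n f \<omega>)"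
  unfolding tuple_majorant_def distrib_left sum.distrib
    sum_PiE_prod_mult_sum[where g = "\<lambda>i. dX n i \<omega>", OF finite_atLeastAtMost] ..

lemma integrable_tuple_majorant:
  assumes "p < n"
  shows "integrable M (tuple_majorant n)"
proof -
  have "integrable M (\<lambda>\<omega>. real p * ((\<Sum>i\<in>{1..n}. dX n i \<omega> ^ 2) * (\<Sum>i\<in>{1..n}. dX n i \<omega>) ^ (p - 1)))"
    using assms by (intro integrable_mult_right integrable_sum_dX_sq_mult_power) simp
  moreover have "integrable M (\<lambda>\<omega>. \<Sum>f\<in>PiE {..<p} (\<lambda>_. {1..n}).
      (\<Prod>l<p. dX n (f l) \<omega>) * max_sq_outside n f \<omega>)"
    by (intro Bochner_Integration.integrable_sum integral_prod_dX_mult_max_sq_outside(1)[OF assms])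
  ultimately show ?thesis
    unfolding tuple_majorant_eq[abs_def] by (rule Bochner_Integration.integrable_add)
qed

lemma sum_integral_prod_dX:
  assumes "0 < n"
  shows "(\<Sum>f\<in>PiE {..<p} (\<lambda>_. {1..n}). integral\<^sup>L M (\<lambda>\<omega>. \<Prod>l<p. dX n (f l) \<omega>))
    = integral\<^sup>L M (\<lambda>\<omega>. (\<Sum>i\<in>{1..n}. dX n i \<omega>) ^ p)"
proof -
  have "(\<Sum>i\<in>{1..n}. dX n i \<omega>) ^ p = (\<Sum>f\<in>PiE {..<p} (\<lambda>_. {1..n}). \<Prod>l<p. dX n (f l) \<omega>)" for \<omega>
    by (rule power_sum_eq_sum_PiE) simp
  moreover have "(\<Sum>f\<in>PiE {..<p} (\<lambda>_. {1..n}). integral\<^sup>L M (\<lambda>\<omega>. \<Prod>l<p. dX n (f l) \<omega>))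
      = integral\<^sup>L M (\<lambda>\<omega>. \<Sum>f\<in>PiE {..<p} (\<lambda>_. {1..n}). \<Prod>l<p. dX n (f l) \<omega>)"
    by (rule Bochner_Integration.integral_sum[symmetric]) (rule integrable_prod_dX[OF assms])
  ultimately show ?thesis
    by simp
qed

lemma integral_tuple_majorant_le:
  "\<exists>K \<ge> 0. \<forall>n > p. integral\<^sup>L M (tuple_majorant n)
    \<le> K * (real n * integral\<^sup>L M (\<lambda>\<omega>. dX n 1 \<omega> ^ (p + 1))
        + real n ^ p * integral\<^sup>L M (\<lambda>\<omega>. (maxX X n \<omega>)\<^sup>2))"
proof -
  obtain K1 where K1: "0 \<le> K1" "\<And>n. 0 < n \<Longrightarrow>
      integral\<^sup>L M (\<lambda>\<omega>. (\<Sum>i\<in>{1..n}. dX n i \<omega> ^ 2) * (\<Sum>i\<in>{1..n}. dX n i \<omega>) ^ (p - 1))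
        \<le> K1 * (real n * integral\<^sup>L M (\<lambda>\<omega>. dX n 1 \<omega> ^ (p + 1)) + real n ^ p)"
    using sum_dX_sq_mult_power_moment by auto
  obtain K2 where K2: "0 \<le> K2" "\<And>n J. 0 < n \<Longrightarrow> J \<subseteq> {1..n} \<Longrightarrow>
      integral\<^sup>L M (\<lambda>\<omega>. (\<Sum>i\<in>J. dX n i \<omega>) ^ p) \<le> K2 * real n ^ p"
    using sum_dX_power_moment[of p] by auto
  have "integral\<^sup>L M (tuple_majorant n)
      \<le> (real p * K1 + K2) * (real n * integral\<^sup>L M (\<lambda>\<omega>. dX n 1 \<omega> ^ (p + 1))
          + real n ^ p * integral\<^sup>L M (\<lambda>\<omega>. (maxX X n \<omega>)\<^sup>2))"
    if n: "p < n" for n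
  proof -
    define W where "W \<omega> = (\<Sum>i\<in>{1..n}. dX n i \<omega> ^ 2) * (\<Sum>i\<in>{1..n}. dX n i \<omega>) ^ (p - 1)" for \<omega>
    define E1 where "E1 = integral\<^sup>L M (\<lambda>\<omega>. dX n 1 \<omega> ^ (p + 1))"
    define EM where "EM = integral\<^sup>L M (\<lambda>\<omega>. (maxX X n \<omega>)\<^sup>2)"
    have n_pos: "0 < n"
      using n by simp
    note outside = integral_prod_dX_mult_max_sq_outside[OF n]
    have "integral\<^sup>L M (tuple_majorant n) = real p * integral\<^sup>L M W
        + (\<Sum>f\<in>PiE {..<p} (\<lambda>_. {1..n}). integral\<^sup>L M (\<lambda>\<omega>. (\<Prod>l<p. dX n (f l) \<omega>) * max_sq_outside n f \<omega>))"
      unfolding tuple_majorant_eq[abs_def] W_def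
      using integrable_sum_dX_sq_mult_power[OF n_pos] outside(1) by simp
    also have "\<dots> \<le> real p * (K1 * (real n * E1 + real n ^ p))
        + (\<Sum>f\<in>PiE {..<p} (\<lambda>_. {1..n}). integral\<^sup>L M (\<lambda>\<omega>. \<Prod>l<p. dX n (f l) \<omega>) * EM)"
      using K1(2)[OF n_pos] outside(2) unfolding EM_def W_def E1_def
      by (intro add_mono sum_mono mult_left_mono) auto
    also have "\<dots> = real p * (K1 * (real n * E1 + real n ^ p))
        + integral\<^sup>L M (\<lambda>\<omega>. (\<Sum>i\<in>{1..n}. dX n i \<omega>) ^ p) * EM"
      by (simp only: sum_distrib_right[symmetric] sum_integral_prod_dX[OF n_pos])
    also have "\<dots> \<le> real p * (K1 * (real n * E1 + real n ^ p)) + K2 * real n ^ p * EM"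
      using K2(2)[OF n_pos order_refl] unfolding EM_def
      by (intro add_left_mono mult_right_mono integral_nonneg_AE) auto
    also have "\<dots> \<le> (real p * K1 + K2) * (real n * E1 + real n ^ p * EM)"
    proof -
      have "1 \<le> EM"
        unfolding EM_def using n_pos by (rule one_le_integral_maxX_sq)
      moreover have "0 \<le> E1"
        unfolding E1_def by (intro integral_nonneg_AE AE_I2 zero_le_power dX_nonneg)
      ultimately have "real p * K1 * real n ^ p \<le> real p * K1 * (real n ^ p * EM)"
          "0 \<le> K2 * (real n * E1)"
        using K1(1) K2(1) by (simp_all add: mult_left_mono mult_le_cancel_left1)
      then show ?thesis
        by (simp add: algebra_simps)
    qed
    finally show ?thesis
      unfolding E1_def EM_def .
  qed
  moreover have "0 \<le> real p * K1 + K2"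
    using K1(1) K2(1) by simp
  ultimately show ?thesis
    by blast
qed

lemma Rstat_le_tuple_majorant:
  assumes "p < n" "\<omega> \<in> space M" "real n / 2 \<le> psum X n \<omega>"
  shows "Rstat p X n \<omega> \<le> 3 ^ (p + 1) / real n ^ (p + 1) * tuple_majorant n \<omega>"
proof -
  define S where "S = psum X n \<omega>"
  define Q where "Q = (\<Sum>i=1..n. (X i \<omega>)\<^sup>2)"
  define U where "U = (\<Sum>i\<in>{1..n}. dX n i \<omega>)"
  define a where "a = 1 + S / real n"
  define c where "c = real n / 3"
  have n: "0 < n"
    using assms(1) by simp
  have S: "0 < S"
    using assms(3) n unfolding S_def by linarith
  have "1 \<le> a"
    unfolding a_def using S by simp
  then have a: "0 < a"
    by simp
  have c: "0 < c"
    unfolding c_def using n by simp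
  have ca: "c * a \<le> S"
    unfolding a_def c_def using assms(3) n by (simp add: S_def field_simps)
  have Q_nonneg: "0 \<le> Q" and U_nonneg: "0 \<le> U"
    unfolding Q_def U_def using assms(2) by (auto intro!: sum_nonneg dX_nonneg)
  have QU: "Q \<le> U * a"
    unfolding Q_def U_def a_def S_def using X_nonneg[OF assms(2)] by (rule sum_sq_le_sum_damped_sq_mult)
  have "Q / S \<le> U * a / (c * a)"
    using QU ca a c S Q_nonneg U_nonneg by (intro frac_le) auto
  then have "(Q / S) ^ p \<le> (U / c) ^ p"
    using Q_nonneg S a by (intro power_mono) auto
  moreover have "(maxX X n \<omega>)\<^sup>2 / S \<le> (maxX X n \<omega>)\<^sup>2 / (c * a)"
    using ca a c S by (intro divide_left_mono) auto
  ultimately have "(Q / S) ^ p * ((maxX X n \<omega>)\<^sup>2 / S) \<le> (U / c) ^ p * ((maxX X n \<omega>)\<^sup>2 / (c * a))"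
    using U_nonneg c S by (intro mult_mono) auto
  moreover have "Rstat p X n \<omega> = (Q / S) ^ p * ((maxX X n \<omega>)\<^sup>2 / S)"
    unfolding Rstat_def Tstat_def Q_def S_def by simp
  ultimately have "Rstat p X n \<omega> \<le> (U / c) ^ p * ((maxX X n \<omega>)\<^sup>2 / (c * a))"
    by simp
  also have "\<dots> = 3 ^ (p + 1) / real n ^ (p + 1) * (U ^ p * (maxX X n \<omega>)\<^sup>2 / a)"
    unfolding c_def using a n by (simp add: field_simps power_divide)
  also have "\<dots> \<le> 3 ^ (p + 1) / real n ^ (p + 1) * tuple_majorant n \<omega>"
    using sum_dX_power_mult_sq_maxX_le[OF assms(1,2)]
    unfolding U_def a_def S_def by (intro mult_left_mono) auto
  finally show ?thesis .
qed

lemma Rstat_le_tuple_majorant_add_exp: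
  assumes "p < n" "\<omega> \<in> space M" "0 \<le> t"
  shows "Rstat p X n \<omega> \<le> 3 ^ (p + 1) / real n ^ (p + 1) * tuple_majorant n \<omega>
    + real n ^ (p + 1) * exp (t * (real n / 2 - psum X n \<omega>))"
proof (cases "psum X n \<omega> < real n / 2")
  case True
  have "Rstat p X n \<omega> \<le> psum X n \<omega> ^ (p + 1)"
    using assms X_pos by (intro Rstat_le_psum_power) auto
  also have "\<dots> \<le> real n ^ (p + 1)"
    using True assms(2) X_nonneg unfolding psum_def by (intro power_mono sum_nonneg) auto
  also have "\<dots> \<le> real n ^ (p + 1) * exp (t * (real n / 2 - psum X n \<omega>))"
  proof -
    have "1 \<le> exp (t * (real n / 2 - psum X n \<omega>))"
      using True assms(3) by simp
    then show ?thesis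
      using mult_left_mono[of 1 _ "real n ^ (p + 1)"] by simp
  qed
  finally show ?thesis
    using tuple_majorant_nonneg[OF assms(1,2)] by (simp add: add_increasing)
next
  case False
  then show ?thesis
    using Rstat_le_tuple_majorant[OF assms(1,2)] by (simp add: add_increasing2)
qed

section \<open>Chernoff bound and the upper estimate\<close>

lemma integrable_exp_neg_X:
  assumes "0 \<le> t"
  shows "integrable M (\<lambda>\<omega>. exp (- t * X i \<omega>))"
proof (rule Bochner_Integration.integrable_bound[of _ "\<lambda>_. 1"])
  show "AE \<omega> in M. norm (exp (- t * X i \<omega>)) \<le> norm (1 :: real)"
  proof (rule AE_I2)
    fix \<omega> assume "\<omega> \<in> space M"
    then have "0 \<le> t * X i \<omega>"
      using assms X_nonneg by simp
    then show "norm (exp (- t * X i \<omega>)) \<le> norm (1 :: real)"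
      by simp
  qed
qed simp_all

lemma integral_exp_neg_X_le:
  assumes "0 \<le> t"
  shows "integral\<^sup>L M (\<lambda>\<omega>. exp (- t * X i \<omega>)) \<le> 1 - t + t\<^sup>2 * moment_bound / 2"
proof -
  have X1: "integrable M (X i)" and X2: "integrable M (\<lambda>\<omega>. X i \<omega> ^ 2)"
    using integrable_X_power[of 1 i] integrable_X_power[of 2 i] by simp_all
  have "integral\<^sup>L M (\<lambda>\<omega>. exp (- t * X i \<omega>)) \<le> integral\<^sup>L M (\<lambda>\<omega>. 1 - t * X i \<omega> + t\<^sup>2 / 2 * X i \<omega> ^ 2)"
  proof (rule integral_mono)
    show "integrable M (\<lambda>\<omega>. exp (- t * X i \<omega>))"
      using assms by (rule integrable_exp_neg_X)
    fix \<omega> assume "\<omega> \<in> space M"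
    then have "0 \<le> t * X i \<omega>"
      using assms X_nonneg by simp
    from exp_minus_le_quadratic[OF this]
    show "exp (- t * X i \<omega>) \<le> 1 - t * X i \<omega> + t\<^sup>2 / 2 * X i \<omega> ^ 2"
      by (simp add: power_mult_distrib)
  qed (use X1 X2 in auto)
  also have "\<dots> = 1 - t + t\<^sup>2 / 2 * integral\<^sup>L M (\<lambda>\<omega>. X i \<omega> ^ 2)"
    using X1 X2 integral_X[of i] by (simp add: prob_space)
  also have "\<dots> \<le> 1 - t + t\<^sup>2 * moment_bound / 2"
    using integral_X_power_le[of 2 i] by (simp add: mult_left_mono divide_right_mono)
  finally show ?thesis .
qed

lemma integral_exp_neg_psum:
  assumes "0 \<le> t"
  shows "integrable M (\<lambda>\<omega>. exp (- t * psum X n \<omega>))"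
    and "integral\<^sup>L M (\<lambda>\<omega>. exp (- t * psum X n \<omega>)) = (\<Prod>i\<in>{1..n}. integral\<^sup>L M (\<lambda>\<omega>. exp (- t * X i \<omega>)))"
proof -
  have exp_psum: "exp (- t * psum X n \<omega>) = (\<Prod>i\<in>{1..n}. exp (- t * X i \<omega>))" for \<omega>
    unfolding psum_def by (simp add: sum_distrib_left exp_sum)
  have indep_exp: "indep_vars (\<lambda>_. borel) (\<lambda>i \<omega>. exp (- t * X i \<omega>)) {1..n}"
    by (rule indep_vars_compose2[OF indep_vars_subset[OF indep]]) auto
  show "integrable M (\<lambda>\<omega>. exp (- t * psum X n \<omega>))"
    unfolding exp_psum
    by (rule indep_vars_integrable[OF _ indep_exp integrable_exp_neg_X[OF assms]]) simp
  show "integral\<^sup>L M (\<lambda>\<omega>. exp (- t * psum X n \<omega>)) = (\<Prod>i\<in>{1..n}. integral\<^sup>L M (\<lambda>\<omega>. exp (- t * X i \<omega>)))"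
    unfolding exp_psum
    by (rule indep_vars_lebesgue_integral[OF _ indep_exp integrable_exp_neg_X[OF assms]]) simp
qed

lemma integral_exp_neg_psum_le:
  "integral\<^sup>L M (\<lambda>\<omega>. exp (- (1 / (2 * moment_bound)) * psum X n \<omega>))
    \<le> exp (- 3 * real n / (8 * moment_bound))"
proof -
  define t where "t = 1 / (2 * moment_bound)"
  have mb: "1 \<le> moment_bound"
    by (rule one_le_moment_bound)
  have t: "0 \<le> t"
    unfolding t_def using mb by simp
  have "integral\<^sup>L M (\<lambda>\<omega>. exp (- t * psum X n \<omega>)) = (\<Prod>i\<in>{1..n}. integral\<^sup>L M (\<lambda>\<omega>. exp (- t * X i \<omega>)))"
    using t by (rule integral_exp_neg_psum)
  also have "\<dots> \<le> (\<Prod>i\<in>{1..n}. 1 - t + t\<^sup>2 * moment_bound / 2)"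
    using t by (intro prod_mono conjI integral_exp_neg_X_le integral_nonneg_AE AE_I2) auto
  also have "1 - t + t\<^sup>2 * moment_bound / 2 = 1 - 3 / (8 * moment_bound)"
    unfolding t_def using mb by (simp add: field_simps power2_eq_square)
  also have "(\<Prod>i\<in>{1..n}. 1 - 3 / (8 * moment_bound)) \<le> exp (- 3 / (8 * moment_bound)) ^ n"
  proof -
    have "3 / (8 * moment_bound) \<le> 1"
      using mb by (simp add: divide_le_eq)
    then show ?thesis
      using exp_ge_add_one_self[of "- 3 / (8 * moment_bound)"] by (simp add: power_mono)
  qed
  also have "\<dots> = exp (- 3 * real n / (8 * moment_bound))"
    by (simp add: exp_of_nat_mult[symmetric])
  finally show ?thesis
    unfolding t_def .
qed

lemma exp_psum_deviation_eq:
  "exp (t * (real n / 2 - psum X n \<omega>)) = exp (t * real n / 2) * exp (- t * psum X n \<omega>)"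
  by (simp add: exp_add[symmetric] algebra_simps)

lemma integrable_exp_psum_deviation:
  "0 \<le> t \<Longrightarrow> integrable M (\<lambda>\<omega>. exp (t * (real n / 2 - psum X n \<omega>)))"
  unfolding exp_psum_deviation_eq using integral_exp_neg_psum(1) by simp

lemma chernoff_bound:
  "\<exists>t \<ge> 0. \<exists>C > 0. \<exists>\<kappa> > 0. \<forall>n.
    real n ^ (p + 1) * integral\<^sup>L M (\<lambda>\<omega>. exp (t * (real n / 2 - psum X n \<omega>))) \<le> C * exp (- \<kappa> * real n)"
proof -
  define t where "t = 1 / (2 * moment_bound)"
  define \<kappa> where "\<kappa> = 1 / (16 * moment_bound)"
  define C where "C = (real (p + 1) * (16 * moment_bound)) ^ (p + 1)"
  have mb: "1 \<le> moment_bound"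
    by (rule one_le_moment_bound)
  have "real n ^ (p + 1) * integral\<^sup>L M (\<lambda>\<omega>. exp (t * (real n / 2 - psum X n \<omega>)))
      \<le> C * exp (- \<kappa> * real n)" for n
  proof -
    have "integral\<^sup>L M (\<lambda>\<omega>. exp (t * (real n / 2 - psum X n \<omega>)))
        = exp (t * real n / 2) * integral\<^sup>L M (\<lambda>\<omega>. exp (- t * psum X n \<omega>))"
      unfolding exp_psum_deviation_eq by simp
    also have "\<dots> \<le> exp (t * real n / 2) * exp (- 3 * real n / (8 * moment_bound))"
      using integral_exp_neg_psum_le[of n] unfolding t_def by (intro mult_left_mono) auto
    also have "\<dots> = exp (- 2 * \<kappa> * real n)"
      unfolding t_def \<kappa>_def using mb by (simp add: exp_add[symmetric] field_simps)
    finally have "real n ^ (p + 1) * integral\<^sup>L M (\<lambda>\<omega>. exp (t * (real n / 2 - psum X n \<omega>)))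
        \<le> real n ^ (p + 1) * exp (- 2 * \<kappa> * real n)"
      by (intro mult_left_mono) auto
    also have "\<dots> \<le> C * exp (\<kappa> * real n) * exp (- 2 * \<kappa> * real n)"
      using power_le_exp_mult[of \<kappa> "real n" "p + 1"] mb
      unfolding C_def \<kappa>_def by (intro mult_right_mono) auto
    also have "\<dots> = C * exp (- \<kappa> * real n)"
      by (simp add: mult.assoc exp_add[symmetric])
    finally show ?thesis .
  qed
  moreover have "0 \<le> t" "0 < C" "0 < \<kappa>"
    unfolding t_def C_def \<kappa>_def using mb by simp_all
  ultimately show ?thesis
    by blast
qed

lemma integral_Rstat_le_majorants:
  assumes "p < n" "0 \<le> t"
  shows "integral\<^sup>L M (Rstat p X n)
    \<le> 3 ^ (p + 1) / real n ^ (p + 1) * integral\<^sup>L M (tuple_majorant n)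
      + real n ^ (p + 1) * integral\<^sup>L M (\<lambda>\<omega>. exp (t * (real n / 2 - psum X n \<omega>)))"
proof -
  have "integral\<^sup>L M (Rstat p X n)
      \<le> integral\<^sup>L M (\<lambda>\<omega>. 3 ^ (p + 1) / real n ^ (p + 1) * tuple_majorant n \<omega>
          + real n ^ (p + 1) * exp (t * (real n / 2 - psum X n \<omega>)))"
  proof (rule integral_mono')
    show "integrable M (\<lambda>\<omega>. 3 ^ (p + 1) / real n ^ (p + 1) * tuple_majorant n \<omega>
        + real n ^ (p + 1) * exp (t * (real n / 2 - psum X n \<omega>)))"
      using integrable_tuple_majorant[OF assms(1)] integrable_exp_psum_deviation[OF assms(2)] by simp
    fix \<omega> assume \<omega>: "\<omega> \<in> space M"
    show "Rstat p X n \<omega> \<le> 3 ^ (p + 1) / real n ^ (p + 1) * tuple_majorant n \<omega>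
        + real n ^ (p + 1) * exp (t * (real n / 2 - psum X n \<omega>))"
      using assms(1) \<omega> assms(2) by (rule Rstat_le_tuple_majorant_add_exp)
    show "0 \<le> 3 ^ (p + 1) / real n ^ (p + 1) * tuple_majorant n \<omega>
        + real n ^ (p + 1) * exp (t * (real n / 2 - psum X n \<omega>))"
      using tuple_majorant_nonneg[OF assms(1) \<omega>] by simp
  qed
  also have "\<dots> = 3 ^ (p + 1) / real n ^ (p + 1) * integral\<^sup>L M (tuple_majorant n)
      + real n ^ (p + 1) * integral\<^sup>L M (\<lambda>\<omega>. exp (t * (real n / 2 - psum X n \<omega>)))"
    using integrable_tuple_majorant[OF assms(1)] integrable_exp_psum_deviation[OF assms(2)] by simp
  finally show ?thesis .
qed

lemma integral_Rstat_le_damped_moment: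
  "\<exists>C > 0. \<exists>\<kappa> > 0. \<forall>n > p. integral\<^sup>L M (Rstat p X n)
    \<le> C * (integral\<^sup>L M (\<lambda>\<omega>. dX n 1 \<omega> ^ (p + 1)) / real n ^ p
          + integral\<^sup>L M (\<lambda>\<omega>. (maxX X n \<omega>)\<^sup>2) / real n + exp (- \<kappa> * real n))"
proof -
  obtain t C1 \<kappa> where t: "0 \<le> t" and C1: "0 < C1" and \<kappa>: "0 < \<kappa>" and chernoff: "\<And>n.
      real n ^ (p + 1) * integral\<^sup>L M (\<lambda>\<omega>. exp (t * (real n / 2 - psum X n \<omega>))) \<le> C1 * exp (- \<kappa> * real n)"
    using chernoff_bound by auto
  obtain K where K: "0 \<le> K" "\<And>n. p < n \<Longrightarrow> integral\<^sup>L M (tuple_majorant n)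
      \<le> K * (real n * integral\<^sup>L M (\<lambda>\<omega>. dX n 1 \<omega> ^ (p + 1))
          + real n ^ p * integral\<^sup>L M (\<lambda>\<omega>. (maxX X n \<omega>)\<^sup>2))"
    using integral_tuple_majorant_le by auto
  define C where "C = 3 ^ (p + 1) * K + C1"
  have "integral\<^sup>L M (Rstat p X n)
      \<le> C * (integral\<^sup>L M (\<lambda>\<omega>. dX n 1 \<omega> ^ (p + 1)) / real n ^ p
          + integral\<^sup>L M (\<lambda>\<omega>. (maxX X n \<omega>)\<^sup>2) / real n + exp (- \<kappa> * real n))"
    if n: "p < n" for n
  proof -
    define E1 where "E1 = integral\<^sup>L M (\<lambda>\<omega>. dX n 1 \<omega> ^ (p + 1))"
    define EM where "EM = integral\<^sup>L M (\<lambda>\<omega>. (maxX X n \<omega>)\<^sup>2)"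
    have "0 \<le> E1"
      unfolding E1_def by (intro integral_nonneg_AE AE_I2 zero_le_power dX_nonneg)
    moreover have "0 \<le> EM"
      unfolding EM_def by (intro integral_nonneg_AE AE_I2) simp
    ultimately have nonneg: "0 \<le> C1 * (E1 / real n ^ p + EM / real n)"
        "0 \<le> 3 ^ (p + 1) * K * exp (- \<kappa> * real n)"
      using C1 K(1) by simp_all
    have "integral\<^sup>L M (Rstat p X n)
        \<le> 3 ^ (p + 1) / real n ^ (p + 1) * (K * (real n * E1 + real n ^ p * EM))
          + C1 * exp (- \<kappa> * real n)"
    proof -
      have "3 ^ (p + 1) / real n ^ (p + 1) * integral\<^sup>L M (tuple_majorant n)
          \<le> 3 ^ (p + 1) / real n ^ (p + 1) * (K * (real n * E1 + real n ^ p * EM))"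
        unfolding E1_def EM_def by (rule mult_left_mono[OF K(2)[OF n]]) simp
      then show ?thesis
        using integral_Rstat_le_majorants[OF n t] chernoff[of n] by linarith
    qed
    also have "\<dots> = 3 ^ (p + 1) * K * (E1 / real n ^ p + EM / real n) + C1 * exp (- \<kappa> * real n)"
      using n by (simp add: field_simps)
    also have "\<dots> \<le> C * (E1 / real n ^ p + EM / real n + exp (- \<kappa> * real n))"
      using nonneg unfolding C_def by (simp add: algebra_simps)
    finally show ?thesis
      unfolding E1_def EM_def .
  qed
  moreover have "0 < C"
    unfolding C_def using K(1) C1 by (intro add_nonneg_pos mult_nonneg_nonneg) auto
  ultimately show ?thesis
    using \<kappa> by blast
qed

section \<open>Lower bounds for the two maxima\<close>

abbreviation max_Wterm_sq :: "nat \<Rightarrow> real" where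
  "max_Wterm_sq n \<equiv> Max {integral\<^sup>L M (\<lambda>\<omega>. Wterm p X n \<gamma> \<omega> * (X k \<omega>)^2) / real n ^ (p - r + 1)
    | r k \<gamma>. 1 \<le> r \<and> r \<le> p \<and> 1 \<le> k \<and> k \<le> r \<and> \<gamma> \<in> compositions p r}"

abbreviation max_Wterm :: "nat \<Rightarrow> real" where
  "max_Wterm n \<equiv> Max {integral\<^sup>L M (Wterm p X n \<gamma>) / real n ^ (p - r + 1)
    | r \<gamma>. 1 \<le> r \<and> r \<le> p \<and> \<gamma> \<in> compositions p r}"

lemma integral_dX_power_le_max_Wterm_sq:
  assumes "0 < n"
  shows "integral\<^sup>L M (\<lambda>\<omega>. dX n 1 \<omega> ^ (p + 1)) / real n ^ p \<le> max_Wterm_sq n"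
proof (rule Max_ge[OF finite_composition_terms(1)])
  have "(\<lambda>\<omega>. Wterm p X n [p] \<omega> * (X 1 \<omega>)^2) = (\<lambda>\<omega>. dX n 1 \<omega> ^ (p + 1))"
    using assms by (intro ext Wterm_singleton_mult_sq)
  then have "integral\<^sup>L M (\<lambda>\<omega>. dX n 1 \<omega> ^ (p + 1)) / real n ^ p
      = integral\<^sup>L M (\<lambda>\<omega>. Wterm p X n [p] \<omega> * (X 1 \<omega>)^2) / real n ^ (p - 1 + 1)"
    using two_le_p by simp
  moreover have "[p] \<in> compositions p 1"
    unfolding compositions_def using two_le_p by simp
  ultimately show "integral\<^sup>L M (\<lambda>\<omega>. dX n 1 \<omega> ^ (p + 1)) / real n ^ p
    \<in> {integral\<^sup>L M (\<lambda>\<omega>. Wterm p X n \<gamma> \<omega> * (X k \<omega>)^2) / real n ^ (p - r + 1)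
          | r k \<gamma>. 1 \<le> r \<and> r \<le> p \<and> 1 \<le> k \<and> k \<le> r \<and> \<gamma> \<in> compositions p r}"
    using two_le_p by (intro CollectI exI[of _ 1] exI[of _ "[p]"]) auto
qed

lemma integrable_prod_X_sq: "integrable M (\<lambda>\<omega>. \<Prod>j<p. X (Suc j) \<omega> ^ 2)"
proof -
  have "indep_vars (\<lambda>_. borel) (\<lambda>i \<omega>. X i \<omega> ^ 2) (Suc ` {..<p})"
    by (rule indep_vars_compose2[OF indep_vars_subset[OF indep]]) auto
  then have "integrable M (\<lambda>\<omega>. \<Prod>i\<in>Suc ` {..<p}. X i \<omega> ^ 2)"
    by (rule indep_vars_integrable[rotated]) (use integrable_X_power in auto)
  then show ?thesis
    by (simp add: prod.reindex)
qed

lemma Wterm_replicate_one_pos_le: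
  assumes "\<omega> \<in> space M"
  shows "0 < Wterm p X n (replicate p 1) \<omega>" "Wterm p X n (replicate p 1) \<omega> \<le> (\<Prod>j<p. X (Suc j) \<omega> ^ 2)"
proof -
  have "0 < (\<Prod>j<p. X (Suc j) \<omega> ^ 2)"
    using X_pos[OF assms] by (intro prod_pos zero_less_power) auto
  moreover have "1 \<le> (psum X p \<omega> / real n + 1) ^ (p + 1)"
    unfolding psum_def using X_nonneg[OF assms] by (intro one_le_power) (simp add: sum_nonneg)
  ultimately show "0 < Wterm p X n (replicate p 1) \<omega>"
      "Wterm p X n (replicate p 1) \<omega> \<le> (\<Prod>j<p. X (Suc j) \<omega> ^ 2)"
    unfolding Wterm_replicate_one by (simp_all add: divide_le_eq mult_le_cancel_left1)
qed

lemma Wterm_replicate_one_mono: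
  assumes "\<omega> \<in> space M" "0 < m" "m \<le> n"
  shows "Wterm p X m (replicate p 1) \<omega> \<le> Wterm p X n (replicate p 1) \<omega>"
proof -
  have S: "0 \<le> psum X p \<omega>"
    unfolding psum_def using X_nonneg[OF assms(1)] by (simp add: sum_nonneg)
  then have "psum X p \<omega> / real n \<le> psum X p \<omega> / real m"
    using assms(2,3) by (intro divide_left_mono) auto
  then have "(psum X p \<omega> / real n + 1) ^ (p + 1) \<le> (psum X p \<omega> / real m + 1) ^ (p + 1)"
    using S by (intro power_mono) auto
  moreover have "0 < psum X p \<omega> / real n + 1" "0 < psum X p \<omega> / real m + 1"
    using S by (simp_all add: add_nonneg_pos)
  moreover have "0 \<le> (\<Prod>j<p. X (Suc j) \<omega> ^ 2)"
    by (simp add: prod_nonneg)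
  ultimately show ?thesis
    unfolding Wterm_replicate_one by (intro divide_left_mono mult_pos_pos zero_less_power) auto
qed

lemma integrable_Wterm_replicate_one: "integrable M (Wterm p X n (replicate p 1))"
proof (rule Bochner_Integration.integrable_bound[OF integrable_prod_X_sq])
  show "Wterm p X n (replicate p 1) \<in> borel_measurable M"
    unfolding Wterm_replicate_one[abs_def] psum_def by measurable
  show "AE \<omega> in M. norm (Wterm p X n (replicate p 1) \<omega>) \<le> norm (\<Prod>j<p. X (Suc j) \<omega> ^ 2)"
    using Wterm_replicate_one_pos_le by (auto intro!: AE_I2 simp: prod_nonneg less_imp_le)
qed

lemma max_Wterm_lower_bound: "\<exists>c > 0. \<forall>n > 0. c / real n \<le> max_Wterm n"
proof -
  define c where "c = integral\<^sup>L M (Wterm p X 1 (replicate p 1))"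
  have "c / real n \<le> max_Wterm n" if n: "0 < n" for n
  proof -
    have "c \<le> integral\<^sup>L M (Wterm p X n (replicate p 1))"
      unfolding c_def using n
      by (intro integral_mono integrable_Wterm_replicate_one Wterm_replicate_one_mono) auto
    then have "c / real n \<le> integral\<^sup>L M (Wterm p X n (replicate p 1)) / real n ^ (p - p + 1)"
      by (simp add: divide_right_mono)
    also have "\<dots> \<le> max_Wterm n"
    proof (rule Max_ge[OF finite_composition_terms(2)])
      have "replicate p 1 \<in> compositions p p"
        unfolding compositions_def by (simp add: sum_list_replicate)
      then show "integral\<^sup>L M (Wterm p X n (replicate p 1)) / real n ^ (p - p + 1)
        \<in> {integral\<^sup>L M (Wterm p X n \<gamma>) / real n ^ (p - r + 1)
          | r \<gamma>. 1 \<le> r \<and> r \<le> p \<and> \<gamma> \<in> compositions p r}"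
        using two_le_p by (intro CollectI exI[of _ p] exI[of _ "replicate p 1"]) auto
    qed
    finally show ?thesis .
  qed
  moreover have "0 < c"
    unfolding c_def
    by (intro integral_pos integrable_Wterm_replicate_one Wterm_replicate_one_pos_le)
  ultimately show ?thesis
    by blast
qed

lemma integral_Rstat_bound:
  "\<exists>c > 0. \<forall>n \<ge> 2 * p. c * integral\<^sup>L M (Rstat p X n)
    \<le> exp (- c * real n) + max_Wterm_sq n + max_Wterm n * integral\<^sup>L M (\<lambda>\<omega>. (maxX X n \<omega>)^2)"
proof -
  obtain C \<kappa> where C: "0 < C" and \<kappa>: "0 < \<kappa>" and upper: "\<And>n. p < n \<Longrightarrow> integral\<^sup>L M (Rstat p X n)
      \<le> C * (integral\<^sup>L M (\<lambda>\<omega>. dX n 1 \<omega> ^ (p + 1)) / real n ^ p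
          + integral\<^sup>L M (\<lambda>\<omega>. (maxX X n \<omega>)\<^sup>2) / real n + exp (- \<kappa> * real n))"
    using integral_Rstat_le_damped_moment by auto
  obtain c0 where c0: "0 < c0" and lower: "\<And>n. 0 < n \<Longrightarrow> c0 / real n \<le> max_Wterm n"
    using max_Wterm_lower_bound by auto
  define c where "c = min (min 1 c0 / C) \<kappa>"
  have c: "0 < c" "0 \<le> c * C" "c * C \<le> 1" "c * C \<le> c0" "c \<le> \<kappa>"
    unfolding c_def using C c0 \<kappa> by (auto simp: min_def field_simps)
  have "c * integral\<^sup>L M (Rstat p X n)
      \<le> exp (- c * real n) + max_Wterm_sq n + max_Wterm n * integral\<^sup>L M (\<lambda>\<omega>. (maxX X n \<omega>)\<^sup>2)"
    if "2 * p \<le> n" for n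
  proof -
    define A where "A = integral\<^sup>L M (\<lambda>\<omega>. dX n 1 \<omega> ^ (p + 1)) / real n ^ p"
    define EM where "EM = integral\<^sup>L M (\<lambda>\<omega>. (maxX X n \<omega>)\<^sup>2)"
    have n: "p < n" "0 < n"
      using that two_le_p by simp_all
    have "c * integral\<^sup>L M (Rstat p X n) \<le> c * C * A + c * C * (EM / real n) + c * C * exp (- \<kappa> * real n)"
      using mult_left_mono[OF upper[OF n(1)], of c] c(1) unfolding A_def EM_def
      by (simp add: algebra_simps)
    moreover have "c * C * A \<le> max_Wterm_sq n"
    proof -
      have "0 \<le> A"
        unfolding A_def by (intro divide_nonneg_nonneg integral_nonneg_AE AE_I2 zero_le_power dX_nonneg) auto
      then have "c * C * A \<le> A"
        using c by (intro mult_left_le_one_le) auto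
      also have "\<dots> \<le> max_Wterm_sq n"
        unfolding A_def using n(2) by (rule integral_dX_power_le_max_Wterm_sq)
      finally show ?thesis .
    qed
    moreover have "c * C * (EM / real n) \<le> max_Wterm n * EM"
    proof -
      have "0 \<le> EM"
        unfolding EM_def by (intro integral_nonneg_AE AE_I2) simp
      then have "c * C * (EM / real n) \<le> c0 / real n * EM"
        using c(4) by (simp add: mult_right_mono divide_right_mono)
      also have "\<dots> \<le> max_Wterm n * EM"
        using lower[OF n(2)] \<open>0 \<le> EM\<close> by (rule mult_right_mono)
      finally show ?thesis .
    qed
    moreover have "c * C * exp (- \<kappa> * real n) \<le> exp (- c * real n)"
    proof -
      have "c * C * exp (- \<kappa> * real n) \<le> exp (- \<kappa> * real n)"
        using c by (intro mult_left_le_one_le) auto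
      also have "\<dots> \<le> exp (- c * real n)"
        using c(5) by (simp add: mult_right_mono)
      finally show ?thesis .
    qed
    ultimately show ?thesis
      unfolding EM_def by linarith
  qed
  then show ?thesis
    using c(1) by blast
qed

end

theorem lemma7:
  fixes M :: "'a measure" and X :: "nat \<Rightarrow> 'a \<Rightarrow> real" and p :: nat
  assumes "prob_space M"
    and "prob_space.indep_vars M (\<lambda>_. borel) X UNIV"
    and "\<And>i. distr M borel (X i) = distr M borel (X 0)"
    and "\<And>i \<omega>. \<omega> \<in> space M \<Longrightarrow> X i \<omega> > 0"
    and "integral\<^sup>L M (X 0) = 1"
    and "p \<ge> 2"
    and "integrable M (\<lambda>\<omega>. (X 0 \<omega>) ^ (p + 2))"
  shows "\<exists>c > 0. \<forall>n \<ge> 2 * p.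
     c * integral\<^sup>L M (Rstat p X n)
       \<le> exp (- c * real n)
         + Max {integral\<^sup>L M (\<lambda>\<omega>. Wterm p X n \<gamma> \<omega> * (X k \<omega>)^2) / real n ^ (p - r + 1)
                 | r k \<gamma>. 1 \<le> r \<and> r \<le> p \<and> 1 \<le> k \<and> k \<le> r \<and> \<gamma> \<in> compositions p r}
         + Max {integral\<^sup>L M (Wterm p X n \<gamma>) / real n ^ (p - r + 1)
                 | r \<gamma>. 1 \<le> r \<and> r \<le> p \<and> \<gamma> \<in> compositions p r}
           * integral\<^sup>L M (\<lambda>\<omega>. (maxX X n \<omega>)^2)"
proof -
  interpret iid_positive M X p
    using assms unfolding iid_positive_def iid_positive_axioms_def by auto
  show ?thesis
    using integral_Rstat_bound by simp
qed

end
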